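(* Let $V$ be an $R$-module and $A=\Gamma_R(V)$ the free $DP$ algebra on $V$. Then the indecomposable quotient of $A$ is $A/A^2\cong U(0)\otimes_R V$, where $A^2$ is the $R$-submodule spanned by products $ab$, $a,b\in A$.
   Context: Fix a commutative unital ring $R$. An "algebra" means a commutative, not necessarily unital, $R$-algebra. A $DP$ algebra is an algebra $A$ with maps $\gamma_n:A\to A$ ($n\ge1$) such that for all $a,b\in A$, $r\in R$, $m,n\ge1$: $\gamma_1(a)=a$; $\gamma_n(a+b)=\gamma_n(a)+\sum_{i+j=n,\,i,j\ge1}\gamma_i(a)\gamma_j(b)+\gamma_n(b)$; $\gamma_n(ab)=a^n\gamma_n(b)$; $\gamma_n(rb)=r^n\gamma_n(b)$; $\gamma_m(a)\gamma_n(a)=\frac{(m+n)!}{m!\,n!}\gamma_{m+n}(a)$; $\gamma_m(\gamma_n(a))=\frac{(mn)!}{m!(n!)^m}\gamma_{mn}(a)$. $\Gamma_R(V)$ is the free $DP$ algebra on $V$. $U(0)$ is the unital ring generated by $R$ and symbols $\phi_p$ ($p$ prime), commuting with one another, subject to $p\phi_p=0$ and $\phi_pr=r^p\phi_p$ ($r\in R$); $U(0)\otimes_R V$ uses the right $R$-module structure of $U(0)$ and is a left $U(0)$-module. The isomorphism is one of abelian $DP$ algebras (left $U(0)$-modules), $\phi_p$ acting on $A/A^2$ via $\gamma_p$. *)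

theory Defs
  imports Main "HOL.Modules" "HOL-Computational_Algebra.Primes"
begin

section \<open>The free DP algebra Gamma_R(V) by generators and relations\<close>

text \<open>Terms of the signature of (non-unital, commutative) R-algebras with
  divided powers, with generators the elements of V.  DGam n a stands for
  gamma_n(a); only n >= 1 is meaningful (see dp_wf).\<close>

datatype ('r, 'v) dpt =
    DGen 'v
  | DZero
  | DAdd "('r, 'v) dpt" "('r, 'v) dpt"
  | DNeg "('r, 'v) dpt"
  | DMul "('r, 'v) dpt" "('r, 'v) dpt"
  | DSmul 'r "('r, 'v) dpt"
  | DGam nat "('r, 'v) dpt"

fun dp_wf :: "('r, 'v) dpt \<Rightarrow> bool" where
  "dp_wf (DGen v) = True"
| "dp_wf DZero = True"
| "dp_wf (DAdd a b) = (dp_wf a \<and> dp_wf b)"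
| "dp_wf (DNeg a) = dp_wf a"
| "dp_wf (DMul a b) = (dp_wf a \<and> dp_wf b)"
| "dp_wf (DSmul r a) = dp_wf a"
| "dp_wf (DGam n a) = (1 \<le> n \<and> dp_wf a)"

definition dsum :: "('r, 'v) dpt list \<Rightarrow> ('r, 'v) dpt" where
  "dsum xs = foldr DAdd xs DZero"

text \<open>dpow a k is the (k+1)-st power a^(k+1) in the non-unital algebra.\<close>
fun dpow :: "('r, 'v) dpt \<Rightarrow> nat \<Rightarrow> ('r, 'v) dpt" where
  "dpow a 0 = a"
| "dpow a (Suc k) = DMul a (dpow a k)"

text \<open>The quotient of
  the well-formed terms by this congruence is Gamma_R(V).\<close>

inductive dp_eq :: "('r::comm_ring_1 \<Rightarrow> 'v::ab_group_add \<Rightarrow> 'v) \<Rightarrow> ('r, 'v) dpt \<Rightarrow> ('r, 'v) dpt \<Rightarrow> bool"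
  for scale where
  dp_refl: "dp_eq scale a a"
| dp_sym: "dp_eq scale a b \<Longrightarrow> dp_eq scale b a"
| dp_trans: "dp_eq scale a b \<Longrightarrow> dp_eq scale b c \<Longrightarrow> dp_eq scale a c"
| dp_cong_add: "dp_eq scale a a' \<Longrightarrow> dp_eq scale b b' \<Longrightarrow> dp_eq scale (DAdd a b) (DAdd a' b')"
| dp_cong_neg: "dp_eq scale a a' \<Longrightarrow> dp_eq scale (DNeg a) (DNeg a')"
| dp_cong_mul: "dp_eq scale a a' \<Longrightarrow> dp_eq scale b b' \<Longrightarrow> dp_eq scale (DMul a b) (DMul a' b')"
| dp_cong_smul: "dp_eq scale a a' \<Longrightarrow> dp_eq scale (DSmul r a) (DSmul r a')"
| dp_cong_gam: "dp_eq scale a a' \<Longrightarrow> dp_eq scale (DGam n a) (DGam n a')"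
| dp_add_assoc: "dp_eq scale (DAdd (DAdd a b) c) (DAdd a (DAdd b c))"
| dp_add_comm: "dp_eq scale (DAdd a b) (DAdd b a)"
| dp_add_zero: "dp_eq scale (DAdd a DZero) a"
| dp_add_neg: "dp_eq scale (DAdd a (DNeg a)) DZero"
| dp_mul_assoc: "dp_eq scale (DMul (DMul a b) c) (DMul a (DMul b c))"
| dp_mul_comm: "dp_eq scale (DMul a b) (DMul b a)"
| dp_distrib: "dp_eq scale (DMul a (DAdd b c)) (DAdd (DMul a b) (DMul a c))"
| dp_smul_add: "dp_eq scale (DSmul r (DAdd a b)) (DAdd (DSmul r a) (DSmul r b))"
| dp_add_smul: "dp_eq scale (DSmul (r + s) a) (DAdd (DSmul r a) (DSmul s a))"
| dp_smul_smul: "dp_eq scale (DSmul (r * s) a) (DSmul r (DSmul s a))"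
| dp_smul_one: "dp_eq scale (DSmul 1 a) a"
| dp_smul_mul: "dp_eq scale (DSmul r (DMul a b)) (DMul (DSmul r a) b)"
| dp_gen_add: "dp_eq scale (DGen (u + v)) (DAdd (DGen u) (DGen v))"
| dp_gen_smul: "dp_eq scale (DGen (scale r v)) (DSmul r (DGen v))"
| dp_gam_one: "dp_eq scale (DGam 1 a) a"
| dp_gam_add: "1 \<le> n \<Longrightarrow> dp_eq scale (DGam n (DAdd a b))
     (DAdd (DGam n a) (DAdd (dsum (map (\<lambda>i. DMul (DGam i a) (DGam (n - i) b)) [1..<n])) (DGam n b)))"
| dp_gam_mul: "1 \<le> n \<Longrightarrow> dp_eq scale (DGam n (DMul a b)) (DMul (dpow a (n - 1)) (DGam n b))"
| dp_gam_smul: "1 \<le> n \<Longrightarrow> dp_eq scale (DGam n (DSmul r b)) (DSmul (r ^ n) (DGam n b))"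
| dp_gam_prod: "1 \<le> m \<Longrightarrow> 1 \<le> n \<Longrightarrow> dp_eq scale (DMul (DGam m a) (DGam n a))
     (DSmul (of_nat ((m + n) choose m)) (DGam (m + n) a))"
| dp_gam_comp: "1 \<le> m \<Longrightarrow> 1 \<le> n \<Longrightarrow> dp_eq scale (DGam m (DGam n a))
     (DSmul (of_nat (fact (m * n) div (fact m * fact n ^ m))) (DGam (m * n) a))"

definition dp_sq :: "('r::comm_ring_1 \<Rightarrow> 'v::ab_group_add \<Rightarrow> 'v) \<Rightarrow> ('r, 'v) dpt \<Rightarrow> bool" where
  "dp_sq scale t \<longleftrightarrow> (\<exists>ps. (\<forall>(r, a, b) \<in> set ps. dp_wf a \<and> dp_wf b) \<and>
      dp_eq scale t (dsum (map (\<lambda>(r, a, b). DSmul r (DMul a b)) ps)))"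

definition dp_indec_eq :: "('r::comm_ring_1 \<Rightarrow> 'v::ab_group_add \<Rightarrow> 'v) \<Rightarrow> ('r, 'v) dpt \<Rightarrow> ('r, 'v) dpt \<Rightarrow> bool" where
  "dp_indec_eq scale a b \<longleftrightarrow> dp_sq scale (DAdd a (DNeg b))"

section \<open>The ring U(0) by generators and relations\<close>

datatype 'r ut =
    UR 'r
  | Phi nat
  | UAdd "'r ut" "'r ut"
  | UNeg "'r ut"
  | UMul "'r ut" "'r ut"

fun u_wf :: "'r ut \<Rightarrow> bool" where
  "u_wf (UR r) = True"
| "u_wf (Phi p) = prime p"
| "u_wf (UAdd a b) = (u_wf a \<and> u_wf b)"
| "u_wf (UNeg a) = u_wf a"
| "u_wf (UMul a b) = (u_wf a \<and> u_wf b)"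

inductive u_eq :: "'r::comm_ring_1 ut \<Rightarrow> 'r ut \<Rightarrow> bool" where
  u_refl: "u_eq a a"
| u_sym: "u_eq a b \<Longrightarrow> u_eq b a"
| u_trans: "u_eq a b \<Longrightarrow> u_eq b c \<Longrightarrow> u_eq a c"
| u_cong_add: "u_eq a a' \<Longrightarrow> u_eq b b' \<Longrightarrow> u_eq (UAdd a b) (UAdd a' b')"
| u_cong_neg: "u_eq a a' \<Longrightarrow> u_eq (UNeg a) (UNeg a')"
| u_cong_mul: "u_eq a a' \<Longrightarrow> u_eq b b' \<Longrightarrow> u_eq (UMul a b) (UMul a' b')"
| u_add_assoc: "u_eq (UAdd (UAdd a b) c) (UAdd a (UAdd b c))"
| u_add_comm: "u_eq (UAdd a b) (UAdd b a)"
| u_add_zero: "u_eq (UAdd a (UR 0)) a"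
| u_add_neg: "u_eq (UAdd a (UNeg a)) (UR 0)"
| u_mul_assoc: "u_eq (UMul (UMul a b) c) (UMul a (UMul b c))"
| u_distrib_left: "u_eq (UMul a (UAdd b c)) (UAdd (UMul a b) (UMul a c))"
| u_distrib_right: "u_eq (UMul (UAdd a b) c) (UAdd (UMul a c) (UMul b c))"
| u_one_left: "u_eq (UMul (UR 1) a) a"
| u_one_right: "u_eq (UMul a (UR 1)) a"
| u_R_add: "u_eq (UR (r + s)) (UAdd (UR r) (UR s))"
| u_R_mul: "u_eq (UR (r * s)) (UMul (UR r) (UR s))"
| u_phi_comm: "prime p \<Longrightarrow> prime q \<Longrightarrow> u_eq (UMul (Phi p) (Phi q)) (UMul (Phi q) (Phi p))"
| u_phi_char: "prime p \<Longrightarrow> u_eq (UMul (UR (of_nat p)) (Phi p)) (UR 0)"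
| u_phi_frob: "prime p \<Longrightarrow> u_eq (UMul (Phi p) (UR r)) (UMul (UR (r ^ p)) (Phi p))"

section \<open>The tensor product U(0) (x)_R V\<close>

datatype ('r, 'v) tt =
    T "'r ut" 'v
  | TZero
  | TAdd "('r, 'v) tt" "('r, 'v) tt"
  | TNeg "('r, 'v) tt"

fun t_wf :: "('r, 'v) tt \<Rightarrow> bool" where
  "t_wf (T u v) = u_wf u"
| "t_wf TZero = True"
| "t_wf (TAdd a b) = (t_wf a \<and> t_wf b)"
| "t_wf (TNeg a) = t_wf a"

text \<open>Free abelian group on U(0) x V modulo bilinearity and R-balancedness
  (U(0) a right R-module via right multiplication by R).\<close>
inductive t_eq :: "('r::comm_ring_1 \<Rightarrow> 'v::ab_group_add \<Rightarrow> 'v) \<Rightarrow> ('r, 'v) tt \<Rightarrow> ('r, 'v) tt \<Rightarrow> bool"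
  for scale where
  t_refl: "t_eq scale a a"
| t_sym: "t_eq scale a b \<Longrightarrow> t_eq scale b a"
| t_trans: "t_eq scale a b \<Longrightarrow> t_eq scale b c \<Longrightarrow> t_eq scale a c"
| t_cong_add: "t_eq scale a a' \<Longrightarrow> t_eq scale b b' \<Longrightarrow> t_eq scale (TAdd a b) (TAdd a' b')"
| t_cong_neg: "t_eq scale a a' \<Longrightarrow> t_eq scale (TNeg a) (TNeg a')"
| t_cong_T: "u_eq u u' \<Longrightarrow> t_eq scale (T u v) (T u' v)"
| t_add_assoc: "t_eq scale (TAdd (TAdd a b) c) (TAdd a (TAdd b c))"
| t_add_comm: "t_eq scale (TAdd a b) (TAdd b a)"
| t_add_zero: "t_eq scale (TAdd a TZero) a"
| t_add_neg: "t_eq scale (TAdd a (TNeg a)) TZero"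
| t_bil_left: "t_eq scale (T (UAdd u u') v) (TAdd (T u v) (T u' v))"
| t_bil_right: "t_eq scale (T u (v + w)) (TAdd (T u v) (T u w))"
| t_balanced: "t_eq scale (T (UMul u (UR r)) v) (T u (scale r v))"

fun tact :: "'r ut \<Rightarrow> ('r, 'v) tt \<Rightarrow> ('r, 'v) tt" where
  "tact w (T u v) = T (UMul w u) v"
| "tact w TZero = TZero"
| "tact w (TAdd a b) = TAdd (tact w a) (tact w b)"
| "tact w (TNeg a) = TNeg (tact w a)"

end

theory Submission
  imports Defs "HOL-Number_Theory.Cong" "HOL-Number_Theory.Prime_Powers"
begin

text \<open>
  Both directions are explicit maps.  Forward: a generator v goes to 1 \<otimes> v, products go to 0,
  and gamma_n acts through the element e_n of U(0) with e_1 = 1, e_(p^k) = phi_p^k and e_n = 0 for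
  all other n.  That this respects the divided power axioms is a matter of binomial coefficients
  modulo p: p divides (p^k choose i) for 0 < i < p^k, and the coefficient (mn)!/(m! (n!)^m) of
  gamma_m \<circ> gamma_n is congruent to 1 modulo p when n is a power of p.

  Backward: u \<otimes> v goes to u v in A/A^2 with phi_p acting as gamma_p.  Modulo A^2 every gamma_n
  is additive and maps A^2 into A^2, so it acts on A/A^2.  The integers c with c gamma_n(a) in A^2
  form an ideal containing every (n choose i), 0 < i < n.  If n is not a prime power these
  binomials are coprime, so gamma_n(a) lies in A^2.  If n = p^k the ideal contains p^k and, since
  gamma_p(gamma_(p^(k-1))) = C gamma_(p^k) with C = 1 mod p and p gamma_p lies in A^2, also p C;
  hence p gamma_(p^k)(a) lies in A^2, and then gamma_(p^k) = gamma_p \<circ> ... \<circ> gamma_p modulo A^2.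
  These are exactly the relations of U(0), and the two maps are mutually inverse.
\<close>

section \<open>Binomial coefficients modulo a prime\<close>

lemma prime_dvd_choose_of_prime_power_dvd:
  assumes p: "prime (p::nat)" and i: "0 < i" "i < p ^ j" and N: "p ^ j dvd N"
  shows "p dvd (N choose i)"
proof (rule ccontr)
  assume np: "\<not> p dvd (N choose i)"
  have "i * (N choose i) = N * ((N - 1) choose (i - 1))"
    using times_binomial_minus1_eq[OF i(1)] .
  hence "p ^ j dvd i * (N choose i)" using N by (metis dvd_mult2)
  moreover have "coprime (p ^ j) (N choose i)"
    using np p by (simp add: prime_imp_coprime)
  ultimately have "p ^ j dvd i" using coprime_dvd_mult_left_iff by blast
  thus False using i by (simp add: nat_dvd_not_less)
qed

lemma prime_dvd_sum_choose:
  assumes p: "prime (p::nat)" and N: "p ^ j dvd M"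
  shows "p dvd (\<Sum>i\<in>{1..<p^j}. (M choose i) * f i)"
  by (rule dvd_sum) (use prime_dvd_choose_of_prime_power_dvd[OF p _ _ N] in auto)

lemma choose_mult_prime_power_cong:
  assumes p: "prime (p::nat)"
  shows "[(m * p ^ k) choose (p ^ k) = m] (mod p)"
proof (induction m)
  case 0
  have "0 < p ^ k" using p prime_gt_0_nat by simp
  then show ?case by (simp add: binomial_eq_0 cong_def)
next
  case (Suc m)
  define N where "N = p ^ k"
  have N0: "0 < N" using p prime_gt_0_nat N_def by simp
  define S where "S = (\<Sum>i\<in>{1..<N}. ((m*N) choose i) * (N choose (N - i)))"
  have "(Suc m * N) choose N = (\<Sum>i\<le>N. ((m*N) choose i) * (N choose (N - i)))"
    using vandermonde[of "m*N" N N] by (simp add: add.commute)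
  also have "{..N} = insert 0 (insert N {1..<N})" using N0 by auto
  finally have eq: "(Suc m * N) choose N = 1 + ((m*N) choose N) + S"
    using N0 by (simp add: S_def)
  have "p dvd S"
    unfolding S_def N_def by (rule prime_dvd_sum_choose[OF p]) simp
  hence "[S = 0] (mod p)" by (simp add: cong_0_iff)
  moreover have "[(m*N) choose N = m] (mod p)" using Suc N_def by simp
  ultimately have "[1 + ((m*N) choose N) + S = 1 + m + 0] (mod p)"
    by (intro cong_add cong_refl)
  then show ?case using eq N_def by simp
qed

lemma choose_pred_mult_prime_power_cong:
  assumes p: "prime (p::nat)" and k: "1 \<le> k"
  shows "[(k * p ^ j - 1) choose (p ^ j - 1) = 1] (mod p)"
proof -
  define N where "N = p ^ j"
  have N0: "0 < N" using p prime_gt_0_nat N_def by simp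
  have kN: "k * N - 1 = (k - 1) * N + (N - 1)"
    using k N0 by (cases k) (auto simp: algebra_simps)
  define S where "S = (\<Sum>i\<in>{1..<N}. (((k - 1) * N) choose i) * ((N - 1) choose (N - 1 - i)))"
  have "(k * N - 1) choose (N - 1) = (\<Sum>i\<le>N - 1. (((k - 1) * N) choose i) * ((N - 1) choose (N - 1 - i)))"
    using vandermonde[of "(k-1)*N" "N - 1" "N - 1"] kN by simp
  also have "{..N - 1} = insert 0 {1..<N}" using N0 by auto
  finally have eq: "(k * N - 1) choose (N - 1) = 1 + S" by (simp add: S_def)
  have "p dvd S"
    unfolding S_def N_def by (rule prime_dvd_sum_choose[OF p]) simp
  then obtain t where "S = p * t" by (auto elim: dvdE)
  moreover have "[1 + p * t = 1] (mod p)"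
    unfolding cong_def by (metis mod_mult_self2 mult.commute)
  ultimately show ?thesis using eq N_def by simp
qed

definition gam_comp_coeff :: "nat \<Rightarrow> nat \<Rightarrow> nat" where
  "gam_comp_coeff m n = fact (m * n) div (fact m * fact n ^ m)"

lemma fact_mult_eq_prod_choose:
  assumes n: "1 \<le> n"
  shows "fact (m * n) = (\<Prod>k\<in>{1..m}. ((k * n - 1) choose (n - 1))) * fact m * (fact n ^ m :: nat)"
proof (induction m)
  case 0 then show ?case by simp
next
  case (Suc m)
  define B where "B = (Suc m * n - 1) choose (n - 1)"
  have "n * ((Suc m * n) choose n) = Suc m * n * B"
    using times_binomial_minus1_eq[of n "Suc m * n"] n B_def by simp
  hence "n * ((Suc m * n) choose n) = n * (Suc m * B)" by (simp add: algebra_simps)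
  hence choose_eq: "(Suc m * n) choose n = Suc m * B" using n by simp
  have "fact (Suc m * n) = fact n * fact (m * n) * ((Suc m * n) choose n)"
    using binomial_fact_lemma[of n "Suc m * n"] by simp
  also have "\<dots> = fact n * fact (m*n) * (Suc m * B)" by (simp only: choose_eq)
  moreover have "(\<Prod>k\<in>{1..Suc m}. ((k * n - 1) choose (n - 1)))
      = (\<Prod>k\<in>{1..m}. ((k * n - 1) choose (n - 1))) * B"
    by (simp add: prod.nat_ivl_Suc' B_def)
  ultimately show ?case
    unfolding Suc.IH fact_Suc power_Suc of_nat_id by (simp only: ac_simps)
qed

lemma gam_comp_coeff_prime_power_cong:
  assumes p: "prime (p::nat)"
  shows "[gam_comp_coeff m (p ^ j) = 1] (mod p)"
proof -
  have n: "1 \<le> p ^ j" using p prime_gt_0_nat by (simp add: Suc_leI)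
  have "gam_comp_coeff m (p ^ j) = (\<Prod>k\<in>{1..m}. ((k * p ^ j - 1) choose (p ^ j - 1)))"
    unfolding gam_comp_coeff_def fact_mult_eq_prod_choose[OF n, of m] by (simp add: mult.assoc)
  also have "[\<dots> = (\<Prod>k\<in>{1..m}. 1)] (mod p)"
    by (rule cong_prod) (use choose_pred_mult_prime_power_cong[OF p] in auto)
  finally show ?thesis by simp
qed

lemma prime_not_dvd_choose_if_not_primepow:
  assumes n: "2 \<le> n" "\<not> primepow n" and p: "prime p" "p dvd n"
  obtains i where "0 < i" "i < n" "\<not> p dvd (n choose i)"
proof -
  define k where "k = multiplicity p n"
  have n0: "n \<noteq> 0" and pu: "\<not> is_unit p" using n p by auto
  obtain m where m: "n = p ^ k * m" "\<not> p dvd m"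
    using multiplicity_decompose'[OF n0 pu] unfolding k_def by blast
  have "k > 0" using p n0 by (simp add: k_def prime_multiplicity_gt_zero_iff)
  have "m \<noteq> 1"
  proof
    assume "m = 1"
    with m p \<open>k > 0\<close> have "primepow n" by (auto simp: primepow_def)
    with n show False by simp
  qed
  moreover have "m \<noteq> 0" using m n0 by auto
  moreover have "0 < p ^ k" using p prime_gt_0_nat by simp
  ultimately have "p ^ k < n" using m by (simp add: nat_mult_less_cancel1[of "p ^ k" 1 m, simplified])
  moreover have "\<not> p dvd (n choose p ^ k)"
    using choose_mult_prime_power_cong[OF p(1), of m k] m by (metis cong_dvd_iff mult.commute)
  ultimately show ?thesis using that \<open>0 < p ^ k\<close> by blast
qed

lemma not_primepow_mult_distinct_primes:
  assumes "prime p" "prime q" "p \<noteq> q" "0 < i" "0 < j"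
  shows "\<not> primepow (p ^ i * q ^ j)"
proof
  assume "primepow (p ^ i * q ^ j)"
  then obtain r k where r: "prime r" "p ^ i * q ^ j = r ^ k" by (auto simp: primepow_def)
  have "p dvd r" using r prime_dvd_power[OF assms(1)] assms(4) by (metis dvd_mult2 dvd_power)
  moreover have "q dvd r" using r prime_dvd_power[OF assms(2)] assms(5) by (metis dvd_mult dvd_power)
  ultimately show False
    using assms(1-3) r(1) primes_dvd_imp_eq by blast
qed

lemma int_ideal_principal:
  fixes S :: "int set"
  assumes add: "\<And>x y. x \<in> S \<Longrightarrow> y \<in> S \<Longrightarrow> x + y \<in> S"
    and mul: "\<And>c x. x \<in> S \<Longrightarrow> c * x \<in> S"
    and n: "n \<in> S" "n \<noteq> 0"
  shows "\<exists>d>0. d \<in> S \<and> (\<forall>x\<in>S. d dvd x)"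
proof -
  define P where "P k \<longleftrightarrow> 0 < k \<and> int k \<in> S" for k :: nat
  have "\<bar>n\<bar> \<in> S" using mul[OF n(1), of "sgn n"] by (simp add: abs_sgn mult.commute)
  hence "P (nat \<bar>n\<bar>)" unfolding P_def using n by simp
  hence Pd: "P (LEAST k. P k)" by (rule LeastI)
  define d where "d = int (LEAST k. P k)"
  have d: "d > 0" "d \<in> S" using Pd unfolding P_def d_def by auto
  have "d dvd x" if x: "x \<in> S" for x
  proof (rule ccontr)
    assume nd: "\<not> d dvd x"
    have "x mod d = x + (- (x div d)) * d" using minus_div_mult_eq_mod[of x d] by simp
    moreover have "x + (- (x div d)) * d \<in> S" using add[OF x mul[OF d(2)]] by blast
    ultimately have "x mod d \<in> S" by simp
    moreover have "0 < x mod d" "x mod d < d"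
      using pos_mod_sign[of d x] pos_mod_bound[of d x] nd d(1) unfolding dvd_eq_mod_eq_0 by linarith+
    ultimately have "P (nat (x mod d))" unfolding P_def by simp
    hence "(LEAST k. P k) \<le> nat (x mod d)" by (rule Least_le)
    thus False using \<open>x mod d < d\<close> \<open>0 < x mod d\<close> unfolding d_def by linarith
  qed
  thus ?thesis using d by blast
qed

section \<open>The ring U(0)\<close>

quotient_type (overloaded) 'r u0 = "'r::comm_ring_1 ut" / u_eq
  by (rule equivpI) (auto simp: reflp_def symp_def transp_def intro: u_refl u_sym u_trans)

fun u_aug :: "'r::comm_ring_1 ut \<Rightarrow> 'r" where
  "u_aug (UR r) = r"
| "u_aug (Phi p) = 0"
| "u_aug (UAdd a b) = u_aug a + u_aug b"
| "u_aug (UNeg a) = - u_aug a"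
| "u_aug (UMul a b) = u_aug a * u_aug b"

lemma u_eq_imp_u_aug_eq: "u_eq a b \<Longrightarrow> u_aug a = u_aug b"
  by (induction rule: u_eq.induct) (auto simp: algebra_simps)

instantiation u0 :: (comm_ring_1) ring_1
begin
lift_definition zero_u0 :: "'a u0" is "UR 0" .
lift_definition one_u0 :: "'a u0" is "UR 1" .
lift_definition plus_u0 :: "'a u0 \<Rightarrow> 'a u0 \<Rightarrow> 'a u0" is UAdd by (rule u_cong_add)
lift_definition uminus_u0 :: "'a u0 \<Rightarrow> 'a u0" is UNeg by (rule u_cong_neg)
lift_definition times_u0 :: "'a u0 \<Rightarrow> 'a u0 \<Rightarrow> 'a u0" is UMul by (rule u_cong_mul)
definition minus_u0 :: "'a u0 \<Rightarrow> 'a u0 \<Rightarrow> 'a u0" where "minus_u0 a b = a + - b"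
instance
proof
  fix a b c :: "'a u0"
  show "a + b + c = a + (b + c)" by transfer (rule u_add_assoc)
  show "a + b = b + a" by transfer (rule u_add_comm)
  show "0 + a = a" by transfer (meson u_add_comm u_add_zero u_trans)
  show "- a + a = 0" by transfer (meson u_add_comm u_add_neg u_trans)
  show "a - b = a + - b" by (simp add: minus_u0_def)
  show "a * b * c = a * (b * c)" by transfer (rule u_mul_assoc)
  show "1 * a = a" by transfer (rule u_one_left)
  show "a * 1 = a" by transfer (rule u_one_right)
  show "(a + b) * c = a * c + b * c" by transfer (rule u_distrib_right)
  show "a * (b + c) = a * b + a * c" by transfer (rule u_distrib_left)
  show "(0::'a u0) \<noteq> 1" by transfer (auto dest: u_eq_imp_u_aug_eq)
qed
end

lift_definition ur :: "'r::comm_ring_1 \<Rightarrow> 'r u0" is UR .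
lift_definition phi :: "nat \<Rightarrow> 'r::comm_ring_1 u0" is Phi .

lemma abs_u0_UR: "abs_u0 (UR r) = ur r" by (simp add: ur.abs_eq)
lemma abs_u0_UMul: "abs_u0 (UMul a b) = abs_u0 a * abs_u0 b" by (simp add: times_u0.abs_eq)
lemma abs_u0_one: "abs_u0 (UR 1) = 1" by (simp add: one_u0.abs_eq)
lemma abs_u0_zero: "abs_u0 (UR 0) = 0" by (simp add: zero_u0.abs_eq)

lemma u_eq_if_abs_u0_eq: "abs_u0 a = abs_u0 b \<Longrightarrow> u_eq a b"
  using u0.abs_eq_iff by blast

lemma ur_add: "ur (r + s) = ur r + ur s" by transfer (rule u_R_add)
lemma ur_mult: "ur (r * s) = ur r * ur s" by transfer (rule u_R_mul)
lemma ur_0: "ur 0 = 0" by transfer (rule u_refl)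
lemma ur_1: "ur 1 = 1" by transfer (rule u_refl)

lemma ur_of_nat: "ur (of_nat n) = of_nat n"
  by (induction n) (simp_all add: ur_add ur_0 ur_1 add.commute)

lemma of_nat_prime_mult_phi: "prime p \<Longrightarrow> of_nat p * (phi p :: 'r::comm_ring_1 u0) = 0"
proof -
  assume p: "prime p"
  have "ur (of_nat p) * (phi p :: 'r u0) = 0" using p by transfer (rule u_phi_char)
  thus ?thesis by (simp add: ur_of_nat)
qed

lemma phi_mult_ur: "prime p \<Longrightarrow> phi p * ur r = ur (r ^ p) * (phi p :: 'r::comm_ring_1 u0)"
  by transfer (rule u_phi_frob)

lemma phi_pow_mult_ur:
  "prime p \<Longrightarrow> phi p ^ k * ur r = ur (r ^ (p ^ k)) * (phi p ^ k :: 'r::comm_ring_1 u0)"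
proof (induction k arbitrary: r)
  case 0 then show ?case by (simp add: ur_1 ur_mult[symmetric] mult.commute)
next
  case (Suc k)
  have "phi p ^ Suc k * ur r = phi p * (phi p ^ k * ur r)" by (simp add: mult.assoc)
  also have "\<dots> = (phi p * ur (r ^ (p ^ k))) * phi p ^ k" using Suc by (simp add: mult.assoc)
  also have "\<dots> = ur ((r ^ (p ^ k)) ^ p) * phi p * phi p ^ k" by (simp only: phi_mult_ur[OF Suc.prems])
  also have "(r ^ (p ^ k)) ^ p = r ^ (p ^ Suc k)" by (simp add: power_mult[symmetric] mult.commute)
  finally show ?case by (simp add: mult.assoc)
qed

lemma of_nat_prime_mult_phi_pow:
  assumes p: "prime p" and k: "0 < k"
  shows "of_nat (p * c) * (phi p ^ k :: 'r::comm_ring_1 u0) = 0"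
proof -
  obtain k' where k': "k = Suc k'" using k by (cases k) auto
  have "of_nat (p * c) * (phi p ^ k :: 'r u0) = of_nat c * (of_nat p * phi p) * phi p ^ k'"
    by (simp only: k' power_Suc of_nat_mult mult.commute[of p c] mult.assoc)
  also have "\<dots> = 0" by (simp add: of_nat_prime_mult_phi[OF p])
  finally show ?thesis .
qed

lemma of_nat_cong_1_mult_phi_pow:
  assumes p: "prime p" and k: "0 < k" and c: "[c = 1] (mod p)"
  shows "of_nat c * (phi p ^ k :: 'r::comm_ring_1 u0) = phi p ^ k"
proof -
  have "c \<ge> 1" using c p prime_gt_1_nat[of p] by (cases c) (auto simp: cong_def)
  from cong_le_nat[OF this, of p] c obtain t where "c = t * p + 1" by blast
  hence "c = 1 + p * t" by simp
  then show ?thesis using of_nat_prime_mult_phi_pow[OF p k, of t] by (simp add: distrib_right)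
qed

lemma phi_mult_phi_distinct:
  assumes p: "prime p" and q: "prime q" and pq: "p \<noteq> q"
  shows "phi p * (phi q :: 'r::comm_ring_1 u0) = 0"
proof -
  have "gcd p q = 1" using p q pq by (simp add: primes_coprime)
  then obtain x y where xy: "p * x = q * y + 1" using bezout_nat[of p q] p
    by (metis prime_gt_0_nat not_gr0)
  have "phi p * (phi q :: 'r u0) = of_nat (p * x) * (phi p * phi q) - of_nat (q * y) * (phi p * phi q)"
    by (simp add: xy distrib_right)
  also have "\<dots> = of_nat x * (of_nat p * phi p) * phi q - of_nat y * (of_nat q * phi p * phi q)"
    by (simp only: of_nat_mult mult.commute[of p x] mult.commute[of q y] mult.assoc)
  also have "\<dots> = of_nat x * (of_nat p * phi p) * phi q - of_nat y * (phi p * (of_nat q * phi q))"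
    by (simp only: mult_of_nat_commute[of q "phi p"] mult.assoc)
  also have "\<dots> = 0"
    by (simp add: of_nat_prime_mult_phi[OF p] of_nat_prime_mult_phi[OF q])
  finally show ?thesis .
qed

lemma phi_pow_mult_phi_pow_distinct:
  assumes "prime p" "prime q" "p \<noteq> q" "0 < i" "0 < j"
  shows "phi p ^ i * (phi q ^ j :: 'r::comm_ring_1 u0) = 0"
proof -
  obtain i' j' where "i = Suc i'" "j = Suc j'" using assms by (metis gr0_conv_Suc)
  hence "phi p ^ i * (phi q ^ j :: 'r u0) = phi p ^ i' * (phi p * phi q) * phi q ^ j'"
    by (simp only: power_Suc2[of "phi p"] power_Suc[of "phi q"] mult.assoc)
  also have "\<dots> = 0" by (simp add: phi_mult_phi_distinct[OF assms(1-3)])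
  finally show ?thesis .
qed

fun ut_pow :: "'r::one ut \<Rightarrow> nat \<Rightarrow> 'r ut" where
  "ut_pow w 0 = UR 1"
| "ut_pow w (Suc k) = UMul w (ut_pow w k)"

text \<open>The element e_n of U(0) through which gamma_n acts on A/A^2.\<close>
definition gam_ut :: "nat \<Rightarrow> 'r::comm_ring_1 ut" where
  "gam_ut n = (if n = 1 then UR 1 else if primepow n
      then ut_pow (Phi (aprimedivisor n)) (multiplicity (aprimedivisor n) n) else UR 0)"

abbreviation gam_u0 :: "nat \<Rightarrow> 'r::comm_ring_1 u0" where
  "gam_u0 n \<equiv> abs_u0 (gam_ut n)"

lemma abs_u0_ut_pow: "abs_u0 (ut_pow w k) = abs_u0 w ^ k"
  by (induction k) (simp_all add: abs_u0_one abs_u0_UMul)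

lemma gam_ut_prime_power: "prime p \<Longrightarrow> 0 < k \<Longrightarrow> gam_ut (p ^ k) = ut_pow (Phi p) k"
proof -
  assume p: "prime p" and k: "0 < k"
  have "primepow (p ^ k)" using p k by (auto simp: primepow_def)
  moreover have "p ^ k \<noteq> 1" using p k prime_gt_1_nat[of p] by simp
  ultimately show ?thesis unfolding gam_ut_def using aprimedivisor_prime_power[OF p k] p by simp
qed

lemma gam_ut_not_primepow: "n \<noteq> 1 \<Longrightarrow> \<not> primepow n \<Longrightarrow> gam_ut n = UR 0"
  by (simp add: gam_ut_def)

lemma gam_ut_prime: "prime p \<Longrightarrow> gam_ut p = UMul (Phi p) (UR 1)"
  using gam_ut_prime_power[of p 1] by simp

lemma gam_ut_wf: "u_wf (gam_ut n)"
proof -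
  have "u_wf (ut_pow (Phi p) k)" if "prime p" for p k using that by (induction k) auto
  moreover have "primepow n \<Longrightarrow> prime (aprimedivisor n)"
    by (auto simp: primepow_def aprimedivisor_prime_power)
  ultimately show ?thesis by (auto simp: gam_ut_def)
qed

lemma gam_u0_prime_power: "prime p \<Longrightarrow> 0 < k \<Longrightarrow> gam_u0 (p ^ k) = phi p ^ k"
  by (simp add: gam_ut_prime_power abs_u0_ut_pow phi_def)

lemma gam_u0_1: "gam_u0 1 = 1" "gam_u0 (Suc 0) = 1"
  by (simp_all add: gam_ut_def abs_u0_one)

lemma gam_u0_not_primepow: "n \<noteq> 1 \<Longrightarrow> \<not> primepow n \<Longrightarrow> gam_u0 n = 0"
  by (simp add: gam_ut_not_primepow abs_u0_zero)

lemma gam_u0_mult_ur: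
  assumes "1 \<le> n"
  shows "gam_u0 n * ur r = ur (r ^ n) * (gam_u0 n :: 'r::comm_ring_1 u0)"
proof -
  consider "n = 1" | p k where "prime p" "0 < k" "n = p ^ k" | "n \<noteq> 1" "\<not> primepow n"
    by (auto simp: primepow_def)
  then show ?thesis
    by cases (simp_all add: gam_u0_1 gam_u0_prime_power phi_pow_mult_ur gam_u0_not_primepow)
qed

lemma of_nat_choose_mult_gam_u0:
  assumes m: "1 \<le> m" and n: "1 \<le> n"
  shows "of_nat ((m + n) choose m) * (gam_u0 (m + n) :: 'r::comm_ring_1 u0) = 0"
proof (cases "primepow (m + n)")
  case True
  then obtain p k where pk: "prime p" "0 < k" "m + n = p ^ k" by (auto simp: primepow_def)
  have "p dvd ((m + n) choose m)"
    using prime_dvd_choose_of_prime_power_dvd[OF pk(1), of m k "m + n"] pk m n by simp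
  then obtain c where "(m + n) choose m = p * c" by (auto elim: dvdE)
  then show ?thesis using pk gam_u0_prime_power of_nat_prime_mult_phi_pow by metis
next
  case False then show ?thesis using m n by (simp add: gam_u0_not_primepow)
qed

lemma gam_u0_mult_gam_u0:
  assumes m: "1 \<le> m" and n: "1 \<le> n"
  shows "gam_u0 m * gam_u0 n = of_nat (gam_comp_coeff m n) * (gam_u0 (m * n) :: 'r::comm_ring_1 u0)"
proof -
  consider "m = 1" | "n = 1" | "m \<noteq> 1" "n \<noteq> 1" "\<not> primepow m \<or> \<not> primepow n"
    | p i q j where "prime p" "0 < i" "m = p ^ i" "prime q" "0 < j" "n = q ^ j"
    unfolding primepow_def by blast
  then show ?thesis
  proof cases
    case 3
    have "\<not> primepow (m * n)" "m * n \<noteq> 1" using 3 primepow_multD by auto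
    then show ?thesis using 3 by (auto simp: gam_u0_not_primepow)
  next
    case 4
    show ?thesis
    proof (cases "p = q")
      case True
      have "of_nat (gam_comp_coeff m n) * (phi p ^ (i + j) :: 'r u0) = phi p ^ (i + j)"
        using 4 True gam_comp_coeff_prime_power_cong[of p m j]
        by (intro of_nat_cong_1_mult_phi_pow) simp_all
      moreover have "gam_u0 (m * n) = (phi p ^ (i + j) :: 'r u0)"
        using 4 True by (simp add: power_add[symmetric] gam_u0_prime_power)
      ultimately show ?thesis using 4 True by (simp add: gam_u0_prime_power power_add)
    next
      case False
      have "\<not> primepow (m * n)" "m * n \<noteq> 1"
        using not_primepow_mult_distinct_primes[of p q i j] 4 False by auto
      then show ?thesis
        using 4 False by (simp add: gam_u0_not_primepow gam_u0_prime_power phi_pow_mult_phi_pow_distinct)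
    qed
  qed (simp_all add: gam_u0_1 gam_comp_coeff_def)
qed

section \<open>Abelian groups up to a congruence\<close>

locale cong_ab_group =
  fixes eq :: "'a \<Rightarrow> 'a \<Rightarrow> bool" (infix "\<doteq>" 50)
    and add :: "'a \<Rightarrow> 'a \<Rightarrow> 'a" and zero :: 'a and neg :: "'a \<Rightarrow> 'a"
  assumes g_refl: "a \<doteq> a" and g_sym: "a \<doteq> b \<Longrightarrow> b \<doteq> a"
    and g_trans[trans]: "a \<doteq> b \<Longrightarrow> b \<doteq> c \<Longrightarrow> a \<doteq> c"
    and g_cadd: "a \<doteq> a' \<Longrightarrow> b \<doteq> b' \<Longrightarrow> add a b \<doteq> add a' b'"
    and g_cneg: "a \<doteq> a' \<Longrightarrow> neg a \<doteq> neg a'"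
    and g_assoc: "add (add a b) c \<doteq> add a (add b c)"
    and g_comm: "add a b \<doteq> add b a"
    and g_zero: "add a zero \<doteq> a"
    and g_negr: "add a (neg a) \<doteq> zero"
begin

lemma g_caddl: "a \<doteq> a' \<Longrightarrow> add a b \<doteq> add a' b" by (rule g_cadd) (auto intro: g_refl)
lemma g_caddr: "b \<doteq> b' \<Longrightarrow> add a b \<doteq> add a b'" by (rule g_cadd) (auto intro: g_refl)

lemma g_zerol: "add zero a \<doteq> a" using g_comm g_zero g_trans by blast
lemma g_negl: "add (neg a) a \<doteq> zero" using g_comm g_negr g_trans by blast

lemma g_lcomm: "add a (add b c) \<doteq> add b (add a c)"
proof -
  have "add a (add b c) \<doteq> add (add a b) c" by (rule g_sym, rule g_assoc)
  also have "\<dots> \<doteq> add (add b a) c" by (rule g_caddl, rule g_comm)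
  also have "\<dots> \<doteq> add b (add a c)" by (rule g_assoc)
  finally show ?thesis .
qed

lemma g_swap: "add (add a b) (add c d) \<doteq> add (add a c) (add b d)"
proof -
  have "add (add a b) (add c d) \<doteq> add a (add b (add c d))" by (rule g_assoc)
  also have "\<dots> \<doteq> add a (add c (add b d))" by (rule g_caddr, rule g_lcomm)
  also have "\<dots> \<doteq> add (add a c) (add b d)" by (rule g_sym, rule g_assoc)
  finally show ?thesis .
qed

lemma g_cancel: "add a b \<doteq> add a c \<Longrightarrow> b \<doteq> c"
proof -
  assume h: "add a b \<doteq> add a c"
  have "b \<doteq> add zero b" by (rule g_sym, rule g_zerol)
  also have "\<dots> \<doteq> add (add (neg a) a) b" by (rule g_caddl, rule g_sym, rule g_negl)
  also have "\<dots> \<doteq> add (neg a) (add a b)" by (rule g_assoc)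
  also have "\<dots> \<doteq> add (neg a) (add a c)" by (rule g_caddr, rule h)
  also have "\<dots> \<doteq> add (add (neg a) a) c" by (rule g_sym, rule g_assoc)
  also have "\<dots> \<doteq> add zero c" by (rule g_caddl, rule g_negl)
  also have "\<dots> \<doteq> c" by (rule g_zerol)
  finally show ?thesis .
qed

lemma g_neg_uniq: "add a b \<doteq> zero \<Longrightarrow> b \<doteq> neg a"
  by (rule g_cancel[of a]) (meson g_negr g_sym g_trans)

lemma g_diff0: "add a (neg b) \<doteq> zero \<Longrightarrow> a \<doteq> b"
proof -
  assume "add a (neg b) \<doteq> zero"
  hence "neg b \<doteq> neg a" using g_neg_uniq by blast
  hence "add a (neg b) \<doteq> add b (neg b)" by (meson g_cadd g_negr g_refl g_sym g_trans)
  moreover have "add a (neg b) \<doteq> add (neg b) a" "add b (neg b) \<doteq> add (neg b) b" by (rule g_comm)+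
  ultimately have "add (neg b) a \<doteq> add (neg b) b" by (meson g_sym g_trans)
  thus ?thesis by (rule g_cancel)
qed

lemma g_eq_diff: "a \<doteq> b \<Longrightarrow> add a (neg b) \<doteq> zero"
  by (meson g_caddl g_negr g_trans)

lemma g_idem0: "add a a \<doteq> a \<Longrightarrow> a \<doteq> zero"
proof -
  assume "add a a \<doteq> a"
  hence "add a a \<doteq> add a zero" by (meson g_sym g_trans g_zero)
  thus ?thesis by (rule g_cancel)
qed

lemma g_neg_zero: "neg zero \<doteq> zero"
  by (meson g_neg_uniq g_sym g_zero)

lemma g_neg_neg: "neg (neg a) \<doteq> a"
  by (meson g_neg_uniq g_negl g_sym)

lemma g_neg_add: "neg (add a b) \<doteq> add (neg a) (neg b)"
proof -
  have "add (add a b) (add (neg a) (neg b)) \<doteq> add (add a (neg a)) (add b (neg b))" by (rule g_swap)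
  also have "\<dots> \<doteq> add zero zero" by (rule g_cadd; rule g_negr)
  also have "\<dots> \<doteq> zero" by (rule g_zero)
  finally show ?thesis by (rule g_sym[OF g_neg_uniq])
qed

lemma g_diff_trans: "add a (neg c) \<doteq> add (add a (neg b)) (add b (neg c))"
proof -
  have "add (add a (neg b)) (add b (neg c)) \<doteq> add (add a b) (add (neg b) (neg c))" by (rule g_swap)
  also have "\<dots> \<doteq> add (add b a) (add (neg b) (neg c))" by (rule g_caddl, rule g_comm)
  also have "\<dots> \<doteq> add (add b (neg b)) (add a (neg c))" by (rule g_swap)
  also have "\<dots> \<doteq> add zero (add a (neg c))" by (rule g_caddl, rule g_negr)
  also have "\<dots> \<doteq> add a (neg c)" by (rule g_zerol)
  finally show ?thesis by (rule g_sym)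
qed

lemma g_diff_add: "add (add a b) (neg (add a' b')) \<doteq> add (add a (neg a')) (add b (neg b'))"
proof -
  have "add (add a b) (neg (add a' b')) \<doteq> add (add a b) (add (neg a') (neg b'))"
    by (rule g_caddr, rule g_neg_add)
  also have "\<dots> \<doteq> add (add a (neg a')) (add b (neg b'))" by (rule g_swap)
  finally show ?thesis .
qed

lemma g_diff_neg: "add (neg a) (neg (neg b)) \<doteq> neg (add a (neg b))"
  by (meson g_neg_add g_sym)

lemma g_diff_swap: "add b (neg a) \<doteq> neg (add a (neg b))"
proof -
  have "add b (neg a) \<doteq> add (neg a) (neg (neg b))" by (meson g_comm g_caddr g_neg_neg g_sym g_trans)
  thus ?thesis using g_diff_neg g_trans by blast
qed

lemma g_add_zero_both: "a \<doteq> zero \<Longrightarrow> b \<doteq> zero \<Longrightarrow> add a b \<doteq> zero"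
  by (meson g_cadd g_trans g_zero)

end

section \<open>From A/A^2 to U(0) \<otimes> V\<close>

interpretation tg: cong_ab_group "t_eq scale" TAdd TZero TNeg
  by unfold_locales (auto intro: t_eq.intros)

lemma tact_t_eq: "t_eq scale a b \<Longrightarrow> t_eq scale (tact w a) (tact w b)"
proof (induction rule: t_eq.induct)
  case (t_cong_T u u' v) then show ?case by (auto intro: t_eq.intros u_eq.intros)
next
  case (t_bil_left u u' v)
  have "t_eq scale (T (UMul w (UAdd u u')) v) (T (UAdd (UMul w u) (UMul w u')) v)"
    by (auto intro: t_eq.intros u_eq.intros)
  then show ?case by (auto intro: t_eq.intros)
next
  case (t_balanced u r v)
  have "t_eq scale (T (UMul w (UMul u (UR r))) v) (T (UMul (UMul w u) (UR r)) v)"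
    by (auto intro: t_eq.intros u_eq.intros)
  then show ?case by (auto intro: t_eq.intros)
qed (auto intro: t_eq.intros)

lemma tact_u_eq: "u_eq w w' \<Longrightarrow> t_eq scale (tact w t) (tact w' t)"
  by (induction t) (auto intro: t_eq.intros u_eq.intros)

lemma tact_abs_u0_eq: "abs_u0 w = abs_u0 w' \<Longrightarrow> t_eq scale (tact w t) (tact w' t)"
  by (rule tact_u_eq, rule u_eq_if_abs_u0_eq)

lemma tact_UMul: "t_eq scale (tact (UMul w1 w2) t) (tact w1 (tact w2 t))"
  by (induction t) (auto intro: t_eq.intros u_eq.intros)

lemma tact_UAdd: "t_eq scale (tact (UAdd w w') t) (TAdd (tact w t) (tact w' t))"
proof (induction t)
  case (T u v)
  have "t_eq scale (T (UMul (UAdd w w') u) v) (T (UAdd (UMul w u) (UMul w' u)) v)"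
    by (auto intro: t_eq.intros u_eq.intros)
  then show ?case by (auto intro: t_eq.intros)
next
  case TZero then show ?case by (simp add: tg.g_sym tg.g_zero)
next
  case (TAdd a b) then show ?case by (simp; meson tg.g_cadd tg.g_swap tg.g_trans)
next
  case (TNeg a) then show ?case by (simp; meson tg.g_cneg tg.g_neg_add tg.g_trans)
qed

lemma tact_zero: "t_eq scale (tact (UR 0) t) TZero"
proof -
  have "t_eq scale (TAdd (tact (UR 0) t) (tact (UR 0) t)) (tact (UAdd (UR 0) (UR 0)) t)"
    by (rule tg.g_sym, rule tact_UAdd)
  also have "t_eq scale \<dots> (tact (UR 0) t)" by (rule tact_u_eq, rule u_add_zero)
  finally show ?thesis by (rule tg.g_idem0)
qed

lemma tact_one: "t_eq scale (tact (UR 1) t) t"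
  by (induction t) (auto intro: t_eq.intros u_eq.intros)

lemma tact_UNeg: "t_eq scale (tact (UNeg w) t) (TNeg (tact w t))"
proof -
  have "t_eq scale (TAdd (tact w t) (tact (UNeg w) t)) (tact (UAdd w (UNeg w)) t)"
    by (rule tg.g_sym, rule tact_UAdd)
  also have "t_eq scale \<dots> (tact (UR 0) t)" by (rule tact_u_eq, rule u_add_neg)
  also have "t_eq scale \<dots> TZero" by (rule tact_zero)
  finally show ?thesis by (rule tg.g_neg_uniq)
qed

lemma tact_gam_ut_prime: "prime p \<Longrightarrow> t_eq scale (tact (gam_ut p) t) (tact (Phi p) t)"
  by (rule tact_u_eq) (simp add: gam_ut_prime u_one_right)

lemma tact_wf: "u_wf w \<Longrightarrow> t_wf t \<Longrightarrow> t_wf (tact w t)"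
  by (induction t) auto

fun to_tensor :: "('r::comm_ring_1, 'v) dpt \<Rightarrow> ('r, 'v) tt" where
  "to_tensor (DGen v) = T (UR 1) v"
| "to_tensor DZero = TZero"
| "to_tensor (DAdd a b) = TAdd (to_tensor a) (to_tensor b)"
| "to_tensor (DNeg a) = TNeg (to_tensor a)"
| "to_tensor (DMul a b) = TZero"
| "to_tensor (DSmul r a) = tact (UR r) (to_tensor a)"
| "to_tensor (DGam n a) = tact (gam_ut n) (to_tensor a)"

lemma to_tensor_wf: "t_wf (to_tensor a)"
  by (induction a) (auto intro: tact_wf simp: gam_ut_wf)

lemma to_tensor_dsum_zero:
  "(\<And>x. x \<in> set xs \<Longrightarrow> t_eq scale (to_tensor x) TZero) \<Longrightarrow>
    t_eq scale (to_tensor (dsum xs)) TZero"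
  by (induction xs) (auto simp: dsum_def intro: tg.g_add_zero_both tg.g_refl)

lemma to_tensor_dp_eq: "dp_eq scale a b \<Longrightarrow> t_eq scale (to_tensor a) (to_tensor b)"
proof (induction rule: dp_eq.induct)
  case (dp_cong_smul a a' r) then show ?case by (simp add: tact_t_eq)
next
  case (dp_cong_gam a a' n) then show ?case by (simp add: tact_t_eq)
next
  case (dp_add_smul r s a)
  have "t_eq scale (tact (UR (r + s)) (to_tensor a)) (tact (UAdd (UR r) (UR s)) (to_tensor a))"
    by (rule tact_u_eq, rule u_R_add)
  then show ?case using tact_UAdd tg.g_trans by fastforce
next
  case (dp_smul_smul r s a)
  have "t_eq scale (tact (UR (r * s)) (to_tensor a)) (tact (UMul (UR r) (UR s)) (to_tensor a))"
    by (rule tact_u_eq, rule u_R_mul)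
  then show ?case using tact_UMul tg.g_trans by fastforce
next
  case (dp_smul_one a) then show ?case by (simp add: tact_one)
next
  case (dp_gen_add u v) then show ?case by (simp add: t_bil_right)
next
  case (dp_gen_smul r v)
  have "t_eq scale (T (UMul (UR r) (UR 1)) v) (T (UMul (UR 1) (UR r)) v)"
    by (rule t_cong_T, rule u_eq_if_abs_u0_eq) (simp add: abs_u0_UMul abs_u0_UR ur_1)
  hence "t_eq scale (T (UMul (UR r) (UR 1)) v) (T (UR 1) (scale r v))"
    using t_balanced tg.g_trans by blast
  then show ?case by (simp add: tg.g_sym)
next
  case (dp_gam_one a) then show ?case by (simp add: gam_ut_def tact_one)
next
  case (dp_gam_add n a b)
  let ?S = "dsum (map (\<lambda>i. DMul (DGam i a) (DGam (n - i) b)) [1..<n])"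
  have "t_eq scale (to_tensor ?S) TZero" by (rule to_tensor_dsum_zero) (auto intro: t_refl)
  hence "t_eq scale (TAdd (to_tensor ?S) (tact (gam_ut n) (to_tensor b))) (tact (gam_ut n) (to_tensor b))"
    by (meson tg.g_caddl tg.g_trans tg.g_zerol)
  then show ?case by (simp add: tg.g_sym tg.g_caddr)
next
  case (dp_gam_mul n a b) then show ?case by (simp add: tg.g_refl)
next
  case (dp_gam_smul n r b)
  have "t_eq scale (tact (gam_ut n) (tact (UR r) (to_tensor b))) (tact (UMul (gam_ut n) (UR r)) (to_tensor b))"
    by (rule tg.g_sym, rule tact_UMul)
  also have "t_eq scale \<dots> (tact (UMul (UR (r ^ n)) (gam_ut n)) (to_tensor b))"
    by (rule tact_abs_u0_eq) (simp add: abs_u0_UMul abs_u0_UR gam_u0_mult_ur[OF dp_gam_smul])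
  also have "t_eq scale \<dots> (tact (UR (r ^ n)) (tact (gam_ut n) (to_tensor b)))" by (rule tact_UMul)
  finally show ?case by simp
next
  case (dp_gam_prod m n a)
  have "t_eq scale (tact (UR (of_nat ((m + n) choose m))) (tact (gam_ut (m + n)) (to_tensor a)))
     (tact (UMul (UR (of_nat ((m + n) choose m))) (gam_ut (m + n))) (to_tensor a))"
    by (rule tg.g_sym, rule tact_UMul)
  also have "t_eq scale \<dots> (tact (UR 0) (to_tensor a))"
    by (rule tact_abs_u0_eq)
      (simp add: abs_u0_UMul abs_u0_UR ur_of_nat of_nat_choose_mult_gam_u0[OF dp_gam_prod] ur_0)
  also have "t_eq scale \<dots> TZero" by (rule tact_zero)
  finally show ?case by (simp add: tg.g_sym)
next
  case (dp_gam_comp m n a)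
  have "t_eq scale (tact (gam_ut m) (tact (gam_ut n) (to_tensor a)))
      (tact (UMul (gam_ut m) (gam_ut n)) (to_tensor a))"
    by (rule tg.g_sym, rule tact_UMul)
  also have "t_eq scale \<dots> (tact (UMul (UR (of_nat (gam_comp_coeff m n))) (gam_ut (m * n))) (to_tensor a))"
    by (rule tact_abs_u0_eq) (simp add: abs_u0_UMul abs_u0_UR ur_of_nat gam_u0_mult_gam_u0[OF dp_gam_comp])
  also have "t_eq scale \<dots> (tact (UR (of_nat (gam_comp_coeff m n))) (tact (gam_ut (m * n)) (to_tensor a)))"
    by (rule tact_UMul)
  finally show ?case by (simp add: gam_comp_coeff_def)
qed (auto intro: t_eq.intros)

lemma to_tensor_dp_sq: "dp_sq scale t \<Longrightarrow> t_eq scale (to_tensor t) TZero"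
proof -
  assume "dp_sq scale t"
  then obtain ps where "dp_eq scale t (dsum (map (\<lambda>(r, a, b). DSmul r (DMul a b)) ps))"
    unfolding dp_sq_def by blast
  moreover have "t_eq scale (to_tensor (dsum (map (\<lambda>(r, a, b). DSmul r (DMul a b)) ps))) TZero"
    by (rule to_tensor_dsum_zero) (auto intro: t_refl)
  ultimately show ?thesis using to_tensor_dp_eq tg.g_trans by blast
qed

lemma to_tensor_indec_eq: "dp_indec_eq scale a b \<Longrightarrow> t_eq scale (to_tensor a) (to_tensor b)"
  unfolding dp_indec_eq_def using to_tensor_dp_sq[of scale "DAdd a (DNeg b)"] tg.g_diff0 by simp
section \<open>Decomposable elements and the indecomposable quotient\<close>

interpretation dg: cong_ab_group "dp_eq scale" DAdd DZero DNeg
  by unfold_locales (auto intro: dp_eq.intros)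

lemma dp_eq_smul_zero: "dp_eq scale (DSmul r DZero) DZero"
proof -
  have "dp_eq scale (DAdd (DSmul r DZero) (DSmul r DZero)) (DSmul r (DAdd DZero DZero))"
    by (rule dg.g_sym, rule dp_smul_add)
  also have "dp_eq scale \<dots> (DSmul r DZero)" by (rule dp_cong_smul, rule dp_add_zero)
  finally show ?thesis by (rule dg.g_idem0)
qed

lemma dp_eq_zero_smul: "dp_eq scale (DSmul 0 a) DZero"
proof -
  have "dp_eq scale (DAdd (DSmul 0 a) (DSmul 0 a)) (DSmul (0 + 0) a)"
    by (rule dg.g_sym, rule dp_add_smul)
  thus ?thesis by (intro dg.g_idem0) simp
qed

lemma dp_eq_neg_smul: "dp_eq scale (DNeg (DSmul r a)) (DSmul (- r) a)"
proof -
  have "dp_eq scale (DAdd (DSmul r a) (DSmul (- r) a)) (DSmul (r + - r) a)"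
    by (rule dg.g_sym, rule dp_add_smul)
  also have "dp_eq scale \<dots> DZero" unfolding add.right_inverse by (rule dp_eq_zero_smul)
  finally show ?thesis by (meson dg.g_neg_uniq dg.g_sym)
qed

lemma dp_eq_neg_minus_one_smul: "dp_eq scale (DNeg a) (DSmul (- 1) a)"
  by (meson dg.g_cneg dg.g_sym dg.g_trans dp_eq_neg_smul dp_smul_one)

lemma dp_eq_smul_neg: "dp_eq scale (DSmul r (DNeg a)) (DNeg (DSmul r a))"
proof -
  have "dp_eq scale (DAdd (DSmul r a) (DSmul r (DNeg a))) (DSmul r (DAdd a (DNeg a)))"
    by (rule dg.g_sym, rule dp_smul_add)
  also have "dp_eq scale \<dots> (DSmul r DZero)" by (rule dp_cong_smul, rule dp_add_neg)
  also have "dp_eq scale \<dots> DZero" by (rule dp_eq_smul_zero)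
  finally show ?thesis by (rule dg.g_neg_uniq)
qed

lemma dp_eq_mul_zero: "dp_eq scale (DMul a DZero) DZero"
proof -
  have "dp_eq scale (DAdd (DMul a DZero) (DMul a DZero)) (DMul a (DAdd DZero DZero))"
    by (rule dg.g_sym, rule dp_distrib)
  also have "dp_eq scale \<dots> (DMul a DZero)" by (rule dp_cong_mul, rule dp_refl, rule dp_add_zero)
  finally show ?thesis by (rule dg.g_idem0)
qed

definition sq_sum :: "('r \<times> ('r, 'v) dpt \<times> ('r, 'v) dpt) list \<Rightarrow> ('r, 'v) dpt" where
  "sq_sum ps = dsum (map (\<lambda>(r, a, b). DSmul r (DMul a b)) ps)"

definition sq_terms_wf :: "('r \<times> ('r, 'v) dpt \<times> ('r, 'v) dpt) list \<Rightarrow> bool" where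
  "sq_terms_wf ps \<longleftrightarrow> (\<forall>(r, a, b) \<in> set ps. dp_wf a \<and> dp_wf b)"

lemma dp_sq_iff_sq_sum:
  "dp_sq scale t \<longleftrightarrow> (\<exists>ps. sq_terms_wf ps \<and> dp_eq scale t (sq_sum ps))"
  unfolding dp_sq_def sq_terms_wf_def sq_sum_def ..

lemma sq_sum_Nil: "sq_sum [] = DZero" by (simp add: sq_sum_def dsum_def)
lemma sq_sum_Cons: "sq_sum ((r, a, b) # ps) = DAdd (DSmul r (DMul a b)) (sq_sum ps)"
  by (simp add: sq_sum_def dsum_def)
lemma sq_terms_wf_Cons: "sq_terms_wf ((r, a, b) # ps) \<longleftrightarrow> dp_wf a \<and> dp_wf b \<and> sq_terms_wf ps"
  by (simp add: sq_terms_wf_def)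
lemma sq_terms_wf_Nil: "sq_terms_wf []" by (simp add: sq_terms_wf_def)

lemma sq_sum_wf: "sq_terms_wf ps \<Longrightarrow> dp_wf (sq_sum ps)"
  by (induction ps) (auto simp: sq_sum_Nil sq_sum_Cons sq_terms_wf_Cons)

lemma sq_sum_append: "dp_eq scale (sq_sum (xs @ ys)) (DAdd (sq_sum xs) (sq_sum ys))"
proof (induction xs)
  case Nil then show ?case by (simp add: sq_sum_Nil dg.g_sym dg.g_zerol)
next
  case (Cons x xs)
  obtain r a b where x: "x = (r, a, b)" by (cases x) auto
  have "dp_eq scale (DAdd (DSmul r (DMul a b)) (sq_sum (xs @ ys)))
      (DAdd (DSmul r (DMul a b)) (DAdd (sq_sum xs) (sq_sum ys)))"
    by (rule dg.g_caddr, rule Cons)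
  also have "dp_eq scale \<dots> (DAdd (DAdd (DSmul r (DMul a b)) (sq_sum xs)) (sq_sum ys))"
    by (rule dg.g_sym, rule dg.g_assoc)
  finally show ?case by (simp add: x sq_sum_Cons)
qed

lemma smul_sq_sum: "dp_eq scale (DSmul s (sq_sum ps)) (sq_sum (map (\<lambda>(r, a, b). (s * r, a, b)) ps))"
proof (induction ps)
  case Nil then show ?case by (simp add: sq_sum_Nil dp_eq_smul_zero)
next
  case (Cons x ps)
  obtain r a b where x: "x = (r, a, b)" by (cases x) auto
  have "dp_eq scale (DSmul s (DAdd (DSmul r (DMul a b)) (sq_sum ps)))
      (DAdd (DSmul s (DSmul r (DMul a b))) (DSmul s (sq_sum ps)))"
    by (rule dp_smul_add)
  also have "dp_eq scale \<dots>
      (DAdd (DSmul (s * r) (DMul a b)) (sq_sum (map (\<lambda>(r, a, b). (s * r, a, b)) ps)))"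
    by (rule dg.g_cadd, rule dg.g_sym, rule dp_smul_smul, rule Cons)
  finally show ?case by (simp add: x sq_sum_Cons)
qed

lemma sq_terms_wf_smul: "sq_terms_wf ps \<Longrightarrow> sq_terms_wf (map (\<lambda>(r, a, b). (s * r, a, b)) ps)"
  by (auto simp: sq_terms_wf_def)

lemma dp_sq_dp_eq: "dp_eq scale t t' \<Longrightarrow> dp_sq scale t \<Longrightarrow> dp_sq scale t'"
  unfolding dp_sq_iff_sq_sum by (meson dg.g_sym dg.g_trans)

lemma dp_sq_zero: "dp_sq scale DZero"
  unfolding dp_sq_iff_sq_sum by (rule exI[of _ "[]"]) (simp add: sq_terms_wf_Nil sq_sum_Nil dp_refl)

lemma dp_sq_add: "dp_sq scale a \<Longrightarrow> dp_sq scale b \<Longrightarrow> dp_sq scale (DAdd a b)"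
proof -
  assume "dp_sq scale a" "dp_sq scale b"
  then obtain ps qs where "sq_terms_wf ps" "dp_eq scale a (sq_sum ps)" "sq_terms_wf qs" "dp_eq scale b (sq_sum qs)"
    unfolding dp_sq_iff_sq_sum by blast
  moreover have "sq_terms_wf (ps @ qs)"
    using \<open>sq_terms_wf ps\<close> \<open>sq_terms_wf qs\<close> by (auto simp: sq_terms_wf_def)
  ultimately show ?thesis unfolding dp_sq_iff_sq_sum
    by (meson dg.g_cadd dg.g_sym dg.g_trans sq_sum_append)
qed

lemma dp_sq_smul: "dp_sq scale a \<Longrightarrow> dp_sq scale (DSmul s a)"
proof -
  assume "dp_sq scale a"
  then obtain ps where "sq_terms_wf ps" "dp_eq scale a (sq_sum ps)" unfolding dp_sq_iff_sq_sum by blast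
  thus ?thesis unfolding dp_sq_iff_sq_sum
    by (meson dg.g_trans dp_cong_smul smul_sq_sum sq_terms_wf_smul)
qed

lemma dp_sq_neg: "dp_sq scale a \<Longrightarrow> dp_sq scale (DNeg a)"
  by (meson dg.g_sym dp_eq_neg_minus_one_smul dp_sq_dp_eq dp_sq_smul)

lemma dp_sq_mul: "dp_wf a \<Longrightarrow> dp_wf b \<Longrightarrow> dp_sq scale (DMul a b)"
  unfolding dp_sq_iff_sq_sum
  apply (rule exI[of _ "[(1, a, b)]"])
  apply (simp add: sq_terms_wf_def sq_sum_Cons sq_sum_Nil)
  by (meson dg.g_sym dg.g_trans dg.g_zero dp_smul_one)

lemma dp_sq_dsum: "(\<And>x. x \<in> set xs \<Longrightarrow> dp_sq scale x) \<Longrightarrow> dp_sq scale (dsum xs)"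
  by (induction xs) (auto simp: dsum_def dp_sq_zero dp_sq_add)

lemma indec_eq_if_dp_eq: "dp_eq scale a b \<Longrightarrow> dp_indec_eq scale a b"
  unfolding dp_indec_eq_def using dg.g_eq_diff dg.g_sym dp_sq_dp_eq dp_sq_zero by blast

interpretation qg: cong_ab_group "dp_indec_eq scale" DAdd DZero DNeg
proof unfold_locales
  fix a b c a' b'
  show "dp_indec_eq scale a a" by (rule indec_eq_if_dp_eq, rule dp_refl)
  show "dp_indec_eq scale a b \<Longrightarrow> dp_indec_eq scale b a" unfolding dp_indec_eq_def
    using dg.g_diff_swap dg.g_sym dp_sq_dp_eq dp_sq_neg by blast
  show "dp_indec_eq scale a b \<Longrightarrow> dp_indec_eq scale b c \<Longrightarrow> dp_indec_eq scale a c"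
    unfolding dp_indec_eq_def
    using dg.g_diff_trans dg.g_sym dp_sq_dp_eq dp_sq_add by blast
  show "dp_indec_eq scale a a' \<Longrightarrow> dp_indec_eq scale b b' \<Longrightarrow>
      dp_indec_eq scale (DAdd a b) (DAdd a' b')"
    unfolding dp_indec_eq_def
    using dg.g_diff_add dg.g_sym dp_sq_dp_eq dp_sq_add by blast
  show "dp_indec_eq scale a a' \<Longrightarrow> dp_indec_eq scale (DNeg a) (DNeg a')" unfolding dp_indec_eq_def
    using dg.g_diff_neg dg.g_sym dp_sq_dp_eq dp_sq_neg by blast
  show "dp_indec_eq scale (DAdd (DAdd a b) c) (DAdd a (DAdd b c))" by (rule indec_eq_if_dp_eq, rule dp_add_assoc)
  show "dp_indec_eq scale (DAdd a b) (DAdd b a)" by (rule indec_eq_if_dp_eq, rule dp_add_comm)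
  show "dp_indec_eq scale (DAdd a DZero) a" by (rule indec_eq_if_dp_eq, rule dp_add_zero)
  show "dp_indec_eq scale (DAdd a (DNeg a)) DZero" by (rule indec_eq_if_dp_eq, rule dp_add_neg)
qed

lemma indec_eq_zero_if_dp_sq: "dp_sq scale t \<Longrightarrow> dp_indec_eq scale t DZero"
  unfolding dp_indec_eq_def by (meson dg.g_caddr dg.g_neg_zero dg.g_sym dg.g_trans dg.g_zero dp_sq_dp_eq)

lemma dp_sq_if_indec_eq_zero: "dp_indec_eq scale t DZero \<Longrightarrow> dp_sq scale t"
  unfolding dp_indec_eq_def by (meson dg.g_caddr dg.g_neg_zero dg.g_trans dg.g_zero dp_sq_dp_eq)

lemma indec_eq_smul: "dp_indec_eq scale a b \<Longrightarrow> dp_indec_eq scale (DSmul r a) (DSmul r b)"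
proof -
  assume "dp_indec_eq scale a b"
  hence "dp_sq scale (DSmul r (DAdd a (DNeg b)))" unfolding dp_indec_eq_def by (rule dp_sq_smul)
  moreover have "dp_eq scale (DSmul r (DAdd a (DNeg b))) (DAdd (DSmul r a) (DNeg (DSmul r b)))"
    by (meson dg.g_caddr dg.g_trans dp_smul_add dp_eq_smul_neg)
  ultimately show ?thesis unfolding dp_indec_eq_def by (rule dp_sq_dp_eq[rotated])
qed

lemma indec_eq_mul_zero: "dp_wf a \<Longrightarrow> dp_wf b \<Longrightarrow> dp_indec_eq scale (DMul a b) DZero"
  by (rule indec_eq_zero_if_dp_sq, rule dp_sq_mul)

lemma indec_eq_add_dp_sq: "dp_sq scale m \<Longrightarrow> dp_indec_eq scale (DAdd m y) y"
  by (meson indec_eq_zero_if_dp_sq qg.g_caddl qg.g_trans qg.g_zerol)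

section \<open>Divided powers on A/A^2\<close>

lemma dpow_wf: "dp_wf a \<Longrightarrow> dp_wf (dpow a k)"
  by (induction k) auto

lemma dp_sq_gam_add_cross_terms:
  assumes "dp_wf a" "dp_wf b"
  shows "dp_sq scale (dsum (map (\<lambda>i. DMul (DGam i a) (DGam (n - i) b)) [1..<n]))"
  by (rule dp_sq_dsum) (use assms in \<open>auto intro!: dp_sq_mul\<close>)

lemma dp_sq_gam_zero: "1 \<le> n \<Longrightarrow> dp_sq scale (DGam n DZero)"
proof -
  assume n: "1 \<le> n"
  have "dp_eq scale (DMul (dpow DZero (n - 1)) (DGam n DZero)) (DGam n (DMul DZero DZero))"
    by (rule dg.g_sym, rule dp_gam_mul[OF n])
  also have "dp_eq scale \<dots> (DGam n DZero)" by (rule dp_cong_gam, rule dp_eq_mul_zero)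
  finally show ?thesis by (rule dp_sq_dp_eq) (rule dp_sq_mul, use n in \<open>auto simp: dpow_wf\<close>)
qed

lemma gam_add_indec_eq: "1 \<le> n \<Longrightarrow> dp_wf a \<Longrightarrow> dp_wf b \<Longrightarrow>
   dp_indec_eq scale (DGam n (DAdd a b)) (DAdd (DGam n a) (DGam n b))"
  using indec_eq_if_dp_eq[OF dp_gam_add] dp_sq_gam_add_cross_terms indec_eq_add_dp_sq qg.g_caddr qg.g_trans by meson

lemma dp_sq_gam_sq_sum: "1 \<le> n \<Longrightarrow> sq_terms_wf ps \<Longrightarrow> dp_sq scale (DGam n (sq_sum ps))"
proof (induction ps)
  case Nil then show ?case by (simp add: sq_sum_Nil dp_sq_gam_zero)
next
  case (Cons x ps)
  obtain r a b where x: "x = (r, a, b)" by (cases x) auto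
  have w: "dp_wf a" "dp_wf b" "sq_terms_wf ps" using Cons.prems x by (auto simp: sq_terms_wf_Cons)
  have wx: "dp_wf (DSmul r (DMul a b))" using w by simp
  have s1: "dp_sq scale (DGam n (DSmul r (DMul a b)))"
  proof -
    have "dp_eq scale (DSmul (r ^ n) (DMul (dpow a (n - 1)) (DGam n b))) (DGam n (DSmul r (DMul a b)))"
      by (meson dg.g_sym dg.g_trans dp_cong_smul dp_gam_mul dp_gam_smul Cons.prems(1))
    moreover have "dp_sq scale (DSmul (r ^ n) (DMul (dpow a (n - 1)) (DGam n b)))"
      by (rule dp_sq_smul, rule dp_sq_mul) (use w dpow_wf Cons.prems in auto)
    ultimately show ?thesis by (rule dp_sq_dp_eq)
  qed
  have "dp_indec_eq scale (DGam n (DAdd (DSmul r (DMul a b)) (sq_sum ps)))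
      (DAdd (DGam n (DSmul r (DMul a b))) (DGam n (sq_sum ps)))"
    by (rule gam_add_indec_eq) (use Cons.prems wx sq_sum_wf w in auto)
  moreover have "dp_indec_eq scale (DAdd (DGam n (DSmul r (DMul a b))) (DGam n (sq_sum ps))) DZero"
    using s1 Cons.IH[OF Cons.prems(1) w(3)] by (meson indec_eq_zero_if_dp_sq qg.g_add_zero_both)
  ultimately show ?case using x sq_sum_Cons dp_sq_if_indec_eq_zero qg.g_trans by metis
qed

lemma indec_eq_obtain_sq_sum:
  "dp_indec_eq scale a b \<Longrightarrow> \<exists>ps. sq_terms_wf ps \<and> dp_eq scale a (DAdd b (sq_sum ps))"
proof -
  assume "dp_indec_eq scale a b"
  then obtain ps where ps: "sq_terms_wf ps" "dp_eq scale (DAdd a (DNeg b)) (sq_sum ps)"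
    unfolding dp_indec_eq_def dp_sq_iff_sq_sum by blast
  have "dp_eq scale a (DAdd b (DAdd a (DNeg b)))"
    by (meson dg.g_lcomm dg.g_caddr dg.g_negr dg.g_zero dg.g_trans dg.g_sym)
  also have "dp_eq scale \<dots> (DAdd b (sq_sum ps))" by (rule dg.g_caddr, rule ps(2))
  finally show ?thesis using ps(1) by blast
qed

lemma gam_indec_eq:
  "1 \<le> n \<Longrightarrow> dp_wf a \<Longrightarrow> dp_wf b \<Longrightarrow> dp_indec_eq scale a b \<Longrightarrow>
    dp_indec_eq scale (DGam n a) (DGam n b)"
proof -
  assume n: "1 \<le> n" and w: "dp_wf a" "dp_wf b" and q: "dp_indec_eq scale a b"
  obtain ps where ps: "sq_terms_wf ps" "dp_eq scale a (DAdd b (sq_sum ps))"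
    using indec_eq_obtain_sq_sum[OF q] by blast
  have "dp_indec_eq scale (DGam n a) (DGam n (DAdd b (sq_sum ps)))"
    by (rule indec_eq_if_dp_eq, rule dp_cong_gam, rule ps(2))
  also have "dp_indec_eq scale \<dots> (DAdd (DGam n b) (DGam n (sq_sum ps)))"
    by (rule gam_add_indec_eq) (use n w sq_sum_wf ps in auto)
  also have "dp_indec_eq scale \<dots> (DAdd (DGam n b) DZero)"
    by (rule qg.g_caddr, rule indec_eq_zero_if_dp_sq, rule dp_sq_gam_sq_sum) (use n ps in auto)
  also have "dp_indec_eq scale \<dots> (DGam n b)" by (rule qg.g_zero)
  finally show ?thesis .
qed

lemma dp_sq_prime_smul_gam_prime:
  "prime p \<Longrightarrow> dp_wf y \<Longrightarrow> dp_sq scale (DSmul (of_nat p) (DGam p y))"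
proof -
  assume p: "prime p" and y: "dp_wf y"
  have p2: "2 \<le> p" using p by (simp add: prime_ge_2_nat)
  have "dp_eq scale (DMul (DGam 1 y) (DGam (p - 1) y))
      (DSmul (of_nat ((1 + (p - 1)) choose 1)) (DGam (1 + (p - 1)) y))"
    by (rule dp_gam_prod) (use p2 in auto)
  moreover have "1 + (p - 1) = p" using p2 by simp
  ultimately have "dp_eq scale (DMul (DGam 1 y) (DGam (p - 1) y)) (DSmul (of_nat p) (DGam p y))" by simp
  moreover have "dp_sq scale (DMul (DGam 1 y) (DGam (p - 1) y))" by (rule dp_sq_mul) (use y p2 in auto)
  ultimately show ?thesis using dp_sq_dp_eq by blast
qed

definition indec_ann ::
  "('r::comm_ring_1 \<Rightarrow> 'v::ab_group_add \<Rightarrow> 'v) \<Rightarrow> ('r, 'v) dpt \<Rightarrow> int set" where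
  "indec_ann scale a = {c. dp_sq scale (DSmul (of_int c) a)}"

lemma indec_ann_add:
  "x \<in> indec_ann scale a \<Longrightarrow> y \<in> indec_ann scale a \<Longrightarrow> x + y \<in> indec_ann scale a"
  unfolding indec_ann_def using dp_add_smul[of scale "of_int x" "of_int y" a]
  by (auto intro: dp_sq_add dp_sq_dp_eq dg.g_sym)

lemma indec_ann_mult: "x \<in> indec_ann scale a \<Longrightarrow> c * x \<in> indec_ann scale a"
  unfolding indec_ann_def using dp_smul_smul[of scale "of_int c" "of_int x" a]
  by (auto intro: dp_sq_smul dp_sq_dp_eq dg.g_sym)

lemma dp_sq_if_one_in_indec_ann: "1 \<in> indec_ann scale a \<Longrightarrow> dp_sq scale a"
  unfolding indec_ann_def using dp_smul_one dp_sq_dp_eq by fastforce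

lemma choose_in_indec_ann:
  assumes a: "dp_wf a" and i: "0 < i" "i < n"
  shows "int (n choose i) \<in> indec_ann scale (DGam n a)"
proof -
  have "dp_eq scale (DMul (DGam i a) (DGam (n - i) a))
      (DSmul (of_nat ((i + (n - i)) choose i)) (DGam (i + (n - i)) a))"
    by (rule dp_gam_prod) (use i in auto)
  moreover have "i + (n - i) = n" using i by simp
  moreover have "dp_sq scale (DMul (DGam i a) (DGam (n - i) a))" by (rule dp_sq_mul) (use a i in auto)
  ultimately show ?thesis unfolding indec_ann_def using dp_sq_dp_eq by (metis mem_Collect_eq of_int_of_nat_eq)
qed

lemma dp_sq_gam_not_primepow:
  assumes n: "2 \<le> n" "\<not> primepow n" and a: "dp_wf a"
  shows "dp_sq scale (DGam n a)"
proof -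
  let ?S = "indec_ann scale (DGam n a)"
  have binom: "int (n choose i) \<in> ?S" if "0 < i" "i < n" for i
    using choose_in_indec_ann[OF a that] .
  have "int n \<in> ?S" using binom[of 1] n by simp
  then obtain d where d: "d > 0" "d \<in> ?S" "\<forall>x\<in>?S. d dvd x"
    using int_ideal_principal[of ?S "int n", OF indec_ann_add indec_ann_mult] n by auto
  have "d = 1"
  proof (rule ccontr)
    assume "d \<noteq> 1"
    with d(1) have "nat d \<noteq> 1" by simp
    then obtain p where p: "prime p" "p dvd nat d" using prime_factor_nat by blast
    hence "int p dvd int (nat d)" by (simp only: of_nat_dvd_iff)
    with d(1) have pd: "int p dvd d" by simp
    have "p dvd n" using pd d(3) \<open>int n \<in> ?S\<close> by (meson dvd_trans int_dvd_int_iff)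
    then obtain i where "0 < i" "i < n" "\<not> p dvd (n choose i)"
      using prime_not_dvd_choose_if_not_primepow n p(1) by blast
    with binom d(3) pd show False by (meson dvd_trans int_dvd_int_iff)
  qed
  with d(2) show ?thesis by (simp add: dp_sq_if_one_in_indec_ann)
qed

lemma dp_sq_gam_gam_distinct_primes:
  assumes p: "prime p" and q: "prime q" and pq: "p \<noteq> q" and x: "dp_wf x"
  shows "dp_sq scale (DGam p (DGam q x))"
proof -
  have p2: "2 \<le> p" "2 \<le> q" using p q by (auto simp: prime_ge_2_nat)
  have "2 \<le> p * q" using mult_le_mono[OF p2(1), of 1 q] p2(2) by simp
  moreover have "\<not> primepow (p * q)" using not_primepow_mult_distinct_primes[of p q 1 1] p q pq by simp
  ultimately have "dp_sq scale (DGam (p * q) x)" using x by (rule dp_sq_gam_not_primepow)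
  moreover have "dp_eq scale (DGam p (DGam q x)) (DSmul (of_nat (gam_comp_coeff p q)) (DGam (p * q) x))"
    using dp_gam_comp[of p q scale x] p2 by (simp add: gam_comp_coeff_def)
  ultimately show ?thesis by (meson dg.g_sym dp_sq_dp_eq dp_sq_smul)
qed

lemma dp_sq_prime_smul_gam_prime_power:
  assumes p: "prime p" and k: "1 \<le> k" and a: "dp_wf a"
  shows "dp_sq scale (DSmul (of_nat p) (DGam (p ^ k) a))"
proof -
  define N where "N = p ^ k"
  let ?S = "indec_ann scale (DGam N a)"
  have p2: "2 \<le> p" using p by (simp add: prime_ge_2_nat)
  have "p \<le> N" unfolding N_def using k p2
    by (metis One_nat_def le_trans self_le_power one_le_numeral power_one_right power_increasing)
  hence N_in: "int N \<in> ?S" using choose_in_indec_ann[OF a, of 1 N] p2 by simp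
  have "int p \<in> ?S"
  proof (cases "k = 1")
    case True then show ?thesis using N_in N_def by simp
  next
    case False
    define C where "C = gam_comp_coeff p (p ^ (k - 1))"
    have N_eq: "p * p ^ (k - 1) = N" unfolding N_def using k by (metis Suc_diff_le diff_Suc_1 power_Suc)
    have "dp_eq scale (DGam p (DGam (p ^ (k - 1)) a)) (DSmul (of_nat C) (DGam N a))"
      using dp_gam_comp[of p "p ^ (k - 1)" scale a] p2 N_eq unfolding C_def gam_comp_coeff_def
      by (simp add: Suc_leI prime_gt_0_nat p)
    hence "dp_eq scale (DSmul (of_nat p) (DGam p (DGam (p ^ (k - 1)) a)))
        (DSmul (of_int (int p * int C)) (DGam N a))"
      by (metis dp_cong_smul dg.g_trans dg.g_sym dp_smul_smul of_int_mult of_int_of_nat_eq)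
    moreover have "dp_sq scale (DSmul (of_nat p) (DGam p (DGam (p ^ (k - 1)) a)))"
      by (rule dp_sq_prime_smul_gam_prime[OF p]) (use a p2 in simp)
    ultimately have pC_in: "int p * int C \<in> ?S" unfolding indec_ann_def using dp_sq_dp_eq by blast
    have "[C = 1] (mod p)" unfolding C_def by (rule gam_comp_coeff_prime_power_cong[OF p])
    hence "coprime C p" using p2 by (metis cong_imp_coprime cong_sym coprime_1_left)
    hence "coprime (int C) (int (p ^ (k - 1)))" by (simp add: coprime_power_right_iff)
    hence "gcd (int N) (int p * int C) = int p"
      unfolding N_eq[symmetric]
      by (simp add: gcd_mult_left coprime_commute gcd.commute coprime_iff_gcd_eq_1
          gcd_mult_distrib_int[symmetric])
    moreover obtain u v where "u * int N + v * (int p * int C) = gcd (int N) (int p * int C)"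
      using bezout_int by blast
    ultimately show ?thesis
      using indec_ann_add indec_ann_mult N_in pC_in by metis
  qed
  thus ?thesis unfolding indec_ann_def N_def by simp
qed

lemma gam_prime_gam_prime_power_indec_eq:
  assumes p: "prime p" and a: "dp_wf a"
  shows "dp_indec_eq scale (DGam p (DGam (p ^ k) a)) (DGam (p ^ Suc k) a)"
proof (cases "k = 0")
  case True
  have p1: "1 \<le> p" using p prime_ge_1_nat by blast
  have g1: "dp_indec_eq scale (DGam 1 a) a" by (rule indec_eq_if_dp_eq, rule dp_gam_one)
  have "dp_indec_eq scale (DGam p (DGam 1 a)) (DGam p a)"
    by (rule gam_indec_eq[OF p1 _ a g1]) (use a in simp)
  then show ?thesis using True by simp
next
  case False
  have p2: "2 \<le> p" using p by (simp add: prime_ge_2_nat)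
  define N where "N = p ^ Suc k"
  define C where "C = gam_comp_coeff p (p ^ k)"
  have e1: "dp_eq scale (DGam p (DGam (p ^ k) a)) (DSmul (of_nat C) (DGam N a))"
    using dp_gam_comp[of p "p ^ k" scale a] p2 unfolding C_def gam_comp_coeff_def N_def
    by (simp add: Suc_leI prime_gt_0_nat p)
  have cg: "[C = 1] (mod p)" unfolding C_def by (rule gam_comp_coeff_prime_power_cong[OF p])
  have "C \<ge> 1" using cg p2 by (cases C) (auto simp: cong_def)
  from cong_le_nat[OF this, of p] cg obtain t where t: "C = t * p + 1" by blast
  have e2: "dp_eq scale (DSmul (of_nat C) (DGam N a))
      (DAdd (DSmul (of_nat t) (DSmul (of_nat p) (DGam N a))) (DSmul 1 (DGam N a)))"
    using dp_add_smul[of scale "of_nat t * of_nat p" 1 "DGam N a"]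
      dp_smul_smul[of scale "of_nat t" "of_nat p" "DGam N a"]
    unfolding t of_nat_add of_nat_mult of_nat_1 by (meson dg.g_caddl dg.g_trans)
  have s: "dp_sq scale (DSmul (of_nat t) (DSmul (of_nat p) (DGam N a)))"
    unfolding N_def by (rule dp_sq_smul, rule dp_sq_prime_smul_gam_prime_power[OF p _ a]) simp
  have "dp_indec_eq scale (DGam p (DGam (p ^ k) a))
      (DAdd (DSmul (of_nat t) (DSmul (of_nat p) (DGam N a))) (DSmul 1 (DGam N a)))"
    using e1 e2 by (meson indec_eq_if_dp_eq dg.g_trans)
  also have "dp_indec_eq scale \<dots> (DSmul 1 (DGam N a))" by (rule indec_eq_add_dp_sq[OF s])
  also have "dp_indec_eq scale \<dots> (DGam N a)" by (rule indec_eq_if_dp_eq, rule dp_smul_one)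
  finally show ?thesis unfolding N_def .
qed

section \<open>From U(0) \<otimes> V to A/A^2\<close>

text \<open>The guard on Phi n keeps the result well-formed: dp_wf excludes DGam 0.\<close>
fun uact :: "'r::comm_ring_1 ut \<Rightarrow> ('r, 'v) dpt \<Rightarrow> ('r, 'v) dpt" where
  "uact (UR r) a = DSmul r a"
| "uact (Phi n) a = (if 1 \<le> n then DGam n a else DZero)"
| "uact (UAdd u u') a = DAdd (uact u a) (uact u' a)"
| "uact (UNeg u) a = DNeg (uact u a)"
| "uact (UMul u u') a = uact u (uact u' a)"

lemma uact_wf: "dp_wf a \<Longrightarrow> dp_wf (uact u a)"
  by (induction u arbitrary: a) auto

lemma uact_indec_eq:
  "dp_wf a \<Longrightarrow> dp_wf b \<Longrightarrow> dp_indec_eq scale a b \<Longrightarrow> dp_indec_eq scale (uact u a) (uact u b)"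
proof (induction u arbitrary: a b)
  case (UR r) then show ?case by (simp add: indec_eq_smul)
next
  case (Phi n) then show ?case by (auto intro: gam_indec_eq qg.g_refl)
next
  case (UAdd u u') then show ?case by (simp add: qg.g_cadd)
next
  case (UNeg u) then show ?case by (simp add: qg.g_cneg)
next
  case (UMul u u') then show ?case by (simp add: uact_wf)
qed

lemma uact_DAdd:
  "dp_wf a \<Longrightarrow> dp_wf b \<Longrightarrow> dp_indec_eq scale (uact u (DAdd a b)) (DAdd (uact u a) (uact u b))"
proof (induction u arbitrary: a b)
  case (UR r) then show ?case by (simp add: indec_eq_if_dp_eq dp_smul_add)
next
  case (Phi n) then show ?case by (auto intro: gam_add_indec_eq qg.g_sym qg.g_zero)
next
  case (UAdd u u') then show ?case by (simp; meson qg.g_cadd qg.g_swap qg.g_trans)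
next
  case (UNeg u) then show ?case by (simp; meson qg.g_cneg qg.g_neg_add qg.g_trans)
next
  case (UMul u u')
  have "dp_indec_eq scale (uact u (uact u' (DAdd a b))) (uact u (DAdd (uact u' a) (uact u' b)))"
    by (rule uact_indec_eq) (use UMul in \<open>auto simp: uact_wf\<close>)
  also have "dp_indec_eq scale \<dots> (DAdd (uact u (uact u' a)) (uact u (uact u' b)))"
    by (rule UMul.IH(1)) (use UMul in \<open>auto simp: uact_wf\<close>)
  finally show ?case by simp
qed

lemma uact_DZero: "dp_indec_eq scale (uact u DZero) DZero"
proof -
  have "dp_indec_eq scale (DAdd (uact u DZero) (uact u DZero)) (uact u (DAdd DZero DZero))"
    by (rule qg.g_sym, rule uact_DAdd) auto
  also have "dp_indec_eq scale \<dots> (uact u DZero)" by (rule uact_indec_eq) (auto intro: qg.g_zero)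
  finally show ?thesis by (rule qg.g_idem0)
qed

lemma uact_DNeg: "dp_wf a \<Longrightarrow> dp_indec_eq scale (uact u (DNeg a)) (DNeg (uact u a))"
proof -
  assume a: "dp_wf a"
  have "dp_indec_eq scale (DAdd (uact u a) (uact u (DNeg a))) (uact u (DAdd a (DNeg a)))"
    by (rule qg.g_sym, rule uact_DAdd) (use a in auto)
  also have "dp_indec_eq scale \<dots> (uact u DZero)"
    by (rule uact_indec_eq) (use a in \<open>auto intro: qg.g_negr\<close>)
  also have "dp_indec_eq scale \<dots> DZero" by (rule uact_DZero)
  finally show ?thesis by (rule qg.g_neg_uniq)
qed

lemma uact_ut_pow_Phi:
  "prime p \<Longrightarrow> dp_wf a \<Longrightarrow> dp_indec_eq scale (uact (ut_pow (Phi p) k) a) (DGam (p ^ k) a)"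
proof (induction k)
  case 0
  have "dp_indec_eq scale (DSmul 1 a) a" by (rule indec_eq_if_dp_eq, rule dp_smul_one)
  moreover have "dp_indec_eq scale a (DGam 1 a)" by (rule qg.g_sym, rule indec_eq_if_dp_eq, rule dp_gam_one)
  ultimately show ?case using qg.g_trans by simp
next
  case (Suc k)
  have p1: "1 \<le> p" using Suc.prems prime_ge_1_nat by blast
  have "dp_indec_eq scale (DGam p (uact (ut_pow (Phi p) k) a)) (DGam p (DGam (p ^ k) a))"
    by (rule gam_indec_eq[OF p1]) (use Suc uact_wf one_le_power[OF p1, of k] in auto)
  also have "dp_indec_eq scale \<dots> (DGam (p ^ Suc k) a)"
    by (rule gam_prime_gam_prime_power_indec_eq) (use Suc in auto)
  finally show ?case using p1 by simp
qed

lemma uact_gam_ut: "1 \<le> n \<Longrightarrow> dp_wf a \<Longrightarrow> dp_indec_eq scale (uact (gam_ut n) a) (DGam n a)"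
proof -
  assume n: "1 \<le> n" and a: "dp_wf a"
  show ?thesis
  proof (cases "n = 1")
    case True
    have "dp_indec_eq scale (DSmul 1 a) a" by (rule indec_eq_if_dp_eq, rule dp_smul_one)
    moreover have "dp_indec_eq scale a (DGam 1 a)" by (rule qg.g_sym, rule indec_eq_if_dp_eq, rule dp_gam_one)
    ultimately have "dp_indec_eq scale (DSmul 1 a) (DGam 1 a)" by (rule qg.g_trans)
    then show ?thesis using True by (simp add: gam_ut_def)
  next
    case n1: False
    show ?thesis
    proof (cases "primepow n")
      case True
      then obtain p k where pk: "prime p" "0 < k" "n = p ^ k" by (auto simp: primepow_def)
      show ?thesis unfolding pk(3) gam_ut_prime_power[OF pk(1,2)] by (rule uact_ut_pow_Phi[OF pk(1) a])
    next
      case False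
      have "dp_sq scale (DGam n a)" by (rule dp_sq_gam_not_primepow) (use n n1 False a in auto)
      then show ?thesis using n1 False
        by (simp add: gam_ut_not_primepow;
            meson dp_eq_zero_smul indec_eq_if_dp_eq indec_eq_zero_if_dp_sq qg.g_sym qg.g_trans)
    qed
  qed
qed

lemma uact_u_eq: "u_eq w w' \<Longrightarrow> dp_wf a \<Longrightarrow> dp_indec_eq scale (uact w a) (uact w' a)"
proof (induction arbitrary: a rule: u_eq.induct)
  case (u_refl a) then show ?case by (simp add: qg.g_refl)
next
  case (u_sym a b) then show ?case by (simp add: qg.g_sym)
next
  case (u_trans a b c) then show ?case by (meson qg.g_trans)
next
  case (u_cong_add a a' b b') then show ?case by (simp add: qg.g_cadd)
next
  case (u_cong_neg a a') then show ?case by (simp add: qg.g_cneg)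
next
  case (u_cong_mul a a' b b' x)
  have "dp_indec_eq scale (uact a (uact b x)) (uact a (uact b' x))"
    by (rule uact_indec_eq) (use u_cong_mul uact_wf in auto)
  also have "dp_indec_eq scale \<dots> (uact a' (uact b' x))"
    by (rule u_cong_mul.IH(1)) (use u_cong_mul uact_wf in auto)
  finally show ?case by simp
next
  case (u_add_assoc a b c) then show ?case by (simp add: qg.g_assoc)
next
  case (u_add_comm a b) then show ?case by (simp add: qg.g_comm)
next
  case (u_add_zero a x) then show ?case
    by (simp; meson dp_eq_zero_smul indec_eq_if_dp_eq qg.g_caddr qg.g_trans qg.g_zero)
next
  case (u_add_neg a x) then show ?case
    by (simp; meson dp_eq_zero_smul indec_eq_if_dp_eq qg.g_negr qg.g_sym qg.g_trans)
next
  case (u_mul_assoc a b c) then show ?case by (simp add: qg.g_refl)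
next
  case (u_distrib_left a b c x) then show ?case by (simp add: uact_DAdd uact_wf)
next
  case (u_distrib_right a b c) then show ?case by (simp add: qg.g_refl)
next
  case (u_one_left a) then show ?case by (simp add: indec_eq_if_dp_eq dp_smul_one)
next
  case (u_one_right a x)
  have "dp_indec_eq scale (uact a (DSmul 1 x)) (uact a x)"
    by (rule uact_indec_eq) (use u_one_right in \<open>auto intro: indec_eq_if_dp_eq dp_smul_one\<close>)
  then show ?case by simp
next
  case (u_R_add r s x) then show ?case by (simp add: indec_eq_if_dp_eq dp_add_smul)
next
  case (u_R_mul r s x) then show ?case by (simp add: indec_eq_if_dp_eq dp_smul_smul)
next
  case (u_phi_comm p q x)
  show ?case
  proof (cases "p = q")
    case True then show ?thesis by (simp add: qg.g_refl)
  next
    case False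
    have "dp_indec_eq scale (DGam p (DGam q x)) DZero" "dp_indec_eq scale (DGam q (DGam p x)) DZero"
      using dp_sq_gam_gam_distinct_primes[of p q x] dp_sq_gam_gam_distinct_primes[of q p x]
        u_phi_comm False indec_eq_zero_if_dp_sq by auto
    moreover have "1 \<le> p" "1 \<le> q" using u_phi_comm prime_ge_1_nat by auto
    ultimately show ?thesis by (simp; meson qg.g_sym qg.g_trans)
  qed
next
  case (u_phi_char p x)
  have p1: "1 \<le> p" using u_phi_char prime_ge_1_nat by blast
  have "dp_indec_eq scale (DSmul (of_nat p) (DGam p x)) DZero"
    by (rule indec_eq_zero_if_dp_sq, rule dp_sq_prime_smul_gam_prime) (use u_phi_char in auto)
  then show ?case using p1 by (simp; meson dp_eq_zero_smul indec_eq_if_dp_eq qg.g_sym qg.g_trans)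
next
  case (u_phi_frob p r x)
  have p1: "1 \<le> p" using u_phi_frob prime_ge_1_nat by blast
  then show ?case by (simp add: indec_eq_if_dp_eq dp_gam_smul)
qed

fun from_tensor :: "('r::comm_ring_1, 'v) tt \<Rightarrow> ('r, 'v) dpt" where
  "from_tensor (T u v) = uact u (DGen v)"
| "from_tensor TZero = DZero"
| "from_tensor (TAdd a b) = DAdd (from_tensor a) (from_tensor b)"
| "from_tensor (TNeg a) = DNeg (from_tensor a)"

lemma from_tensor_wf: "dp_wf (from_tensor t)"
  by (induction t) (auto intro: uact_wf)

lemma from_tensor_t_eq: "t_eq scale t t' \<Longrightarrow> dp_indec_eq scale (from_tensor t) (from_tensor t')"
proof (induction rule: t_eq.induct)
  case (t_cong_T u u' v) then show ?case by (simp add: uact_u_eq)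
next
  case (t_bil_left u u' v) then show ?case by (simp add: qg.g_refl)
next
  case (t_bil_right u v w)
  have "dp_indec_eq scale (uact u (DGen (v + w))) (uact u (DAdd (DGen v) (DGen w)))"
    by (rule uact_indec_eq) (auto intro: indec_eq_if_dp_eq dp_gen_add)
  also have "dp_indec_eq scale \<dots> (DAdd (uact u (DGen v)) (uact u (DGen w)))" by (rule uact_DAdd) auto
  finally show ?case by simp
next
  case (t_balanced u r v)
  have "dp_indec_eq scale (uact u (DSmul r (DGen v))) (uact u (DGen (scale r v)))"
    by (rule uact_indec_eq) (auto intro: indec_eq_if_dp_eq dp_gen_smul dg.g_sym)
  then show ?case by simp
qed (auto intro: qg.g_refl qg.g_sym qg.g_trans qg.g_cadd qg.g_cneg qg.g_assoc qg.g_comm qg.g_zero qg.g_negr)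

lemma from_tensor_tact: "dp_indec_eq scale (from_tensor (tact w t)) (uact w (from_tensor t))"
proof (induction t)
  case (T u v) then show ?case by (simp add: qg.g_refl)
next
  case TZero then show ?case by (simp add: uact_DZero qg.g_sym)
next
  case (TAdd a b) then show ?case
    by (simp; meson uact_DAdd from_tensor_wf qg.g_cadd qg.g_sym qg.g_trans)
next
  case (TNeg a) then show ?case
    by (simp; meson uact_DNeg from_tensor_wf qg.g_cneg qg.g_sym qg.g_trans)
qed

lemma from_tensor_to_tensor: "dp_wf a \<Longrightarrow> dp_indec_eq scale (from_tensor (to_tensor a)) a"
proof (induction a)
  case (DGen v) then show ?case by (simp add: indec_eq_if_dp_eq dp_smul_one)
next
  case DZero then show ?case by (simp add: qg.g_refl)
next
  case (DAdd a b) then show ?case by (simp add: qg.g_cadd)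
next
  case (DNeg a) then show ?case by (simp add: qg.g_cneg)
next
  case (DMul a b) then show ?case by (simp add: indec_eq_mul_zero qg.g_sym)
next
  case (DSmul r a)
  have "dp_indec_eq scale (from_tensor (tact (UR r) (to_tensor a))) (DSmul r (from_tensor (to_tensor a)))"
    using from_tensor_tact[of scale "UR r"] by simp
  also have "dp_indec_eq scale \<dots> (DSmul r a)" by (rule indec_eq_smul) (use DSmul in auto)
  finally show ?case by simp
next
  case (DGam n a)
  have "dp_indec_eq scale (from_tensor (tact (gam_ut n) (to_tensor a)))
      (uact (gam_ut n) (from_tensor (to_tensor a)))"
    by (rule from_tensor_tact)
  also have "dp_indec_eq scale \<dots> (uact (gam_ut n) a)" by (rule uact_indec_eq) (use DGam from_tensor_wf in auto)
  also have "dp_indec_eq scale \<dots> (DGam n a)" by (rule uact_gam_ut) (use DGam in auto)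
  finally show ?case by simp
qed

lemma to_tensor_uact: "u_wf u \<Longrightarrow> t_eq scale (to_tensor (uact u a)) (tact u (to_tensor a))"
proof (induction u arbitrary: a)
  case (UR r) then show ?case by (simp add: t_refl)
next
  case (Phi p)
  then show ?case using prime_ge_1_nat tact_gam_ut_prime by simp
next
  case (UAdd u u') then show ?case by (simp; meson tact_UAdd tg.g_cadd tg.g_sym tg.g_trans)
next
  case (UNeg u) then show ?case by (simp; meson tact_UNeg tg.g_cneg tg.g_sym tg.g_trans)
next
  case (UMul u u')
  have "t_eq scale (to_tensor (uact u (uact u' a))) (tact u (to_tensor (uact u' a)))" using UMul by simp
  also have "t_eq scale \<dots> (tact u (tact u' (to_tensor a)))" by (rule tact_t_eq) (use UMul in simp)
  also have "t_eq scale \<dots> (tact (UMul u u') (to_tensor a))" by (rule tg.g_sym, rule tact_UMul)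
  finally show ?case by simp
qed

lemma to_tensor_surj: "t_wf t \<Longrightarrow> \<exists>a. dp_wf a \<and> t_eq scale (to_tensor a) t"
proof (induction t)
  case (T u v)
  have "t_eq scale (to_tensor (uact u (DGen v))) (T (UMul u (UR 1)) v)"
    using to_tensor_uact[of u scale "DGen v"] T by simp
  also have "t_eq scale \<dots> (T u v)" by (rule t_cong_T, rule u_one_right)
  finally show ?case using uact_wf[of "DGen v" u] by auto
next
  case TZero then show ?case by (auto intro!: exI[of _ DZero] t_refl)
next
  case (TAdd a b)
  then obtain x y where "dp_wf x" "t_eq scale (to_tensor x) a" "dp_wf y" "t_eq scale (to_tensor y) b" by auto
  then show ?case by (auto intro!: exI[of _ "DAdd x y"] tg.g_cadd)
next
  case (TNeg a)
  then obtain x where "dp_wf x" "t_eq scale (to_tensor x) a" by auto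
  then show ?case by (auto intro!: exI[of _ "DNeg x"] tg.g_cneg)
qed

lemma to_tensor_eq_iff_indec_eq:
  assumes "dp_wf a" "dp_wf b"
  shows "t_eq scale (to_tensor a) (to_tensor b) \<longleftrightarrow> dp_indec_eq scale a b"
proof
  assume "t_eq scale (to_tensor a) (to_tensor b)"
  hence "dp_indec_eq scale (from_tensor (to_tensor a)) (from_tensor (to_tensor b))"
    by (rule from_tensor_t_eq)
  thus "dp_indec_eq scale a b"
    using from_tensor_to_tensor[OF assms(1), of scale] from_tensor_to_tensor[OF assms(2), of scale]
    by (meson qg.g_sym qg.g_trans)
qed (rule to_tensor_indec_eq)

theorem mainTheorem10:
  fixes scale :: "'r::comm_ring_1 \<Rightarrow> 'v::ab_group_add \<Rightarrow> 'v"
  assumes "module scale"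
  shows "\<exists>f :: ('r, 'v) dpt \<Rightarrow> ('r, 'v) tt.
    (\<forall>a. dp_wf a \<longrightarrow> t_wf (f a)) \<and>
    (\<forall>a b. dp_wf a \<longrightarrow> dp_wf b \<longrightarrow> (t_eq scale (f a) (f b) \<longleftrightarrow> dp_indec_eq scale a b)) \<and>
    (\<forall>t. t_wf t \<longrightarrow> (\<exists>a. dp_wf a \<and> t_eq scale (f a) t)) \<and>
    (\<forall>a b. dp_wf a \<longrightarrow> dp_wf b \<longrightarrow> t_eq scale (f (DAdd a b)) (TAdd (f a) (f b))) \<and>
    (\<forall>r a. dp_wf a \<longrightarrow> t_eq scale (f (DSmul r a)) (tact (UR r) (f a))) \<and>
    (\<forall>p a. prime p \<longrightarrow> dp_wf a \<longrightarrow> t_eq scale (f (DGam p a)) (tact (Phi p) (f a)))"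
proof (intro exI[of _ to_tensor] conjI allI impI)
  fix a b :: "('r, 'v) dpt"
  assume "dp_wf a" "dp_wf b"
  then show "t_eq scale (to_tensor a) (to_tensor b) \<longleftrightarrow> dp_indec_eq scale a b"
    by (rule to_tensor_eq_iff_indec_eq)
qed (simp_all add: to_tensor_wf to_tensor_surj tact_gam_ut_prime t_refl)

end
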